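(* Let $(T^{E}_{m},T^{\mathbb{K}}_{m})_{m\in M}$ be a generator for $(\mathcal{FV},E)$, let $X$ be a set, $\mathfrak{K}$ a family of sets with $\bigcup_{K\in\mathfrak{K}}K\subset X$ which is closed under finite unions, and $\pi\colon\bigcup_{m\in M}\omega_m\to X$ a map. Suppose $\mathcal{FV}(\Omega,Y)\subset\operatorname{AP}_{\pi,\mathfrak{K}}(\Omega,Y)$ as a linear subspace for $Y\in\{\mathbb{K},E\}$. Then: (1) if for every $u\in\mathcal{FV}(\Omega)\varepsilon E$, $m\in M$, $x\in\omega_m$ one has $S(u)\in\operatorname{dom}T^E_m$ and $T^E_m(S(u))(x)=u(T^{\mathbb{K}}_{m,x})$, then $S(u)\in\operatorname{AP}_{\pi,\mathfrak{K}}(\Omega,E)$ for all $u\in\mathcal{FV}(\Omega)\varepsilon E$; (2) if for every $e'\in E'$, $f\in\mathcal{FV}(\Omega,E)$, $m\in M$ one has $e'\circ f\in\operatorname{dom}T^{\mathbb{K}}_m$ and $T^{\mathbb{K}}_m(e'\circ f)=e'\circ T^E_m(f)$ on $\omega_m$, then $e'\circ f\in\operatorname{AP}_{\pi,\mathfrak{K}}(\Omega,\mathbb{K})$ for all $e'\in E'$ and $f\in\mathcal{FV}(\Omega,E)$.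
   Context: $\mathbb{K}\in\{\mathbb{R},\mathbb{C}\}$, $E$ a non-trivial locally convex Hausdorff space over $\mathbb{K}$ with directed fundamental system of seminorms $(p_\alpha)_{\alpha\in\mathfrak{A}}$. Let $\Omega$ be a non-empty set, $J,M$ non-empty index sets, $(\omega_m)_{m\in M}$ non-empty sets, $\nu_{j,m}\colon\omega_m\to[0,\infty)$ such that for all $m$, $x\in\omega_m$ some $\nu_{j,m}(x)>0$. For $Y\in\{\mathbb{K},E\}$ (for $\mathbb{K}$ only $|\cdot|$), let $\operatorname{AP}(\Omega,Y)\subset Y^\Omega$ be a linear subspace and $T^Y_m\colon\operatorname{dom}T^Y_m\to Y^{\omega_m}$ linear maps on linear subspaces $\operatorname{dom}T^Y_m\subset Y^\Omega$. $\mathcal{FV}(\Omega,Y):=\{f\in\operatorname{AP}(\Omega,Y)\cap\bigcap_m\operatorname{dom}T^Y_m: |f|_{j,m,\alpha}:=\sup_{x\in\omega_m}p_\alpha(T^Y_m(f)(x))\nu_{j,m}(x)<\infty\ \forall j,m,\alpha\}$ with these seminorms; $\mathcal{FV}(\Omega):=\mathcal{FV}(\Omega,\mathbb{K})$, $T^Y_{m,x}(f):=T^Y_m(f)(x)$. Dom-space: Hausdorff, directed seminorms, and for $Y=\mathbb{K}$ all point evaluations $\delta_x$ are in $\mathcal{FV}(\Omega)'$. Generator for $(\mathcal{FV},E)$: $(T^E_m,T^{\mathbb{K}}_m)_{m\in M}$ with $\mathcal{FV}(\Omega)$, $\mathcal{FV}(\Omega,E)$ dom-spaces over the same $J,M,\omega_m,\nu_{j,m}$.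 $\mathcal{FV}(\Omega)\varepsilon E$: continuous linear maps from $\mathcal{FV}(\Omega)'$ (topology of uniform convergence on absolutely convex compact sets) to $E$, with the topology of uniform convergence on equicontinuous sets; $S(u)(x):=u(\delta_x)$. $\operatorname{AP}_{\pi,\mathfrak{K}}(\Omega,Y)$ is the set of $f\in\bigcap_{m}\operatorname{dom}T^Y_m$ such that for all $\varepsilon>0$, $j\in J$, $m\in M$, $\alpha$ there is $K\in\mathfrak{K}$ with (i) $\sup_{x\in\omega_m,\ \pi(x)\notin K}p_\alpha(T^Y_m(f)(x))\nu_{j,m}(x)<\varepsilon$ and (ii) $\{T^Y_m(f)(x)\nu_{j,m}(x): x\in\omega_m,\ \pi(x)\in K\}$ is precompact in $Y$. *)

theory Defs
  imports "HOL-Analysis.Analysis"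
begin

text \<open>The locally convex topology on a carrier V generated by the seminorms q i (i in I);
  diff is the subtraction of the vector space.\<close>
definition seminorm_topology ::
  "'v set \<Rightarrow> ('v \<Rightarrow> 'v \<Rightarrow> 'v) \<Rightarrow> 'i set \<Rightarrow> ('i \<Rightarrow> 'v \<Rightarrow> real) \<Rightarrow> 'v topology" where
  "seminorm_topology V diff I q = topology (\<lambda>U. U \<subseteq> V \<and>
     (\<forall>x\<in>U. \<exists>F \<epsilon>. finite F \<and> F \<subseteq> I \<and> \<epsilon> > 0 \<and>
        {y \<in> V. \<forall>i\<in>F. q i (diff y x) < \<epsilon>} \<subseteq> U))"

definition precompact_sn :: "('v \<Rightarrow> 'v \<Rightarrow> 'v) \<Rightarrow> ('i \<Rightarrow> 'v \<Rightarrow> real) \<Rightarrow> 'v set \<Rightarrow> bool" where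
  "precompact_sn diff q A \<longleftrightarrow> (\<forall>F \<epsilon>. finite F \<and> \<epsilon> > 0 \<longrightarrow>
     (\<exists>G. finite G \<and> A \<subseteq> (\<Union>g\<in>G. {y. \<forall>i\<in>F. q i (diff y g) < \<epsilon>})))"

definition fsubspace :: "('k \<Rightarrow> 'y::ab_group_add \<Rightarrow> 'y) \<Rightarrow> ('o \<Rightarrow> 'y) set \<Rightarrow> bool" where
  "fsubspace s V \<longleftrightarrow> (\<lambda>_. 0) \<in> V \<and> (\<forall>f\<in>V. \<forall>g\<in>V. (\<lambda>t. f t + g t) \<in> V) \<and>
     (\<forall>c. \<forall>f\<in>V. (\<lambda>t. s c (f t)) \<in> V)"

definition flinear_on :: "('k \<Rightarrow> 'y::ab_group_add \<Rightarrow> 'y) \<Rightarrow> ('o \<Rightarrow> 'y) set \<Rightarrow> 'w set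
    \<Rightarrow> (('o \<Rightarrow> 'y) \<Rightarrow> 'w \<Rightarrow> 'y) \<Rightarrow> bool" where
  "flinear_on s D W T \<longleftrightarrow>
     (\<forall>f\<in>D. \<forall>g\<in>D. \<forall>x\<in>W. T (\<lambda>t. f t + g t) x = T f x + T g x) \<and>
     (\<forall>c. \<forall>f\<in>D. \<forall>x\<in>W. T (\<lambda>t. s c (f t)) x = s c (T f x))"

definition FV :: "('o \<Rightarrow> 'y) set \<Rightarrow> ('m \<Rightarrow> ('o \<Rightarrow> 'y) set) \<Rightarrow> ('m \<Rightarrow> ('o \<Rightarrow> 'y) \<Rightarrow> 'w \<Rightarrow> 'y)
    \<Rightarrow> ('m \<Rightarrow> 'w set) \<Rightarrow> ('j \<Rightarrow> 'm \<Rightarrow> 'w \<Rightarrow> real) \<Rightarrow> ('a \<Rightarrow> 'y \<Rightarrow> real) \<Rightarrow> ('o \<Rightarrow> 'y) set" where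
  "FV AP domT T \<omega> \<nu> q = {f \<in> AP. (\<forall>m. f \<in> domT m) \<and>
     (\<forall>j m \<alpha>. bdd_above ((\<lambda>x. q \<alpha> (T m f x) * \<nu> j m x) ` \<omega> m))}"

definition FVnorm :: "('m \<Rightarrow> ('o \<Rightarrow> 'y) \<Rightarrow> 'w \<Rightarrow> 'y) \<Rightarrow> ('m \<Rightarrow> 'w set) \<Rightarrow> ('j \<Rightarrow> 'm \<Rightarrow> 'w \<Rightarrow> real)
    \<Rightarrow> ('a \<Rightarrow> 'y \<Rightarrow> real) \<Rightarrow> 'j \<times> 'm \<times> 'a \<Rightarrow> ('o \<Rightarrow> 'y) \<Rightarrow> real" where
  "FVnorm T \<omega> \<nu> q i f = (case i of (j, m, \<alpha>) \<Rightarrow> (SUP x\<in>\<omega> m. q \<alpha> (T m f x) * \<nu> j m x))"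

definition fdiff :: "('o \<Rightarrow> 'y::ab_group_add) \<Rightarrow> ('o \<Rightarrow> 'y) \<Rightarrow> 'o \<Rightarrow> 'y" where
  "fdiff f g = (\<lambda>t. f t - g t)"

definition hausdorff_directed :: "('o \<Rightarrow> 'y::ab_group_add) set \<Rightarrow> ('i \<Rightarrow> ('o \<Rightarrow> 'y) \<Rightarrow> real) \<Rightarrow> bool" where
  "hausdorff_directed V q \<longleftrightarrow>
     (\<forall>f\<in>V. f \<noteq> (\<lambda>_. 0) \<longrightarrow> (\<exists>i. q i f \<noteq> 0)) \<and>
     (\<forall>i1 i2. \<exists>i3 C. \<forall>f\<in>V. max (q i1 f) (q i2 f) \<le> C * q i3 f)"

text \<open>Topological dual of a scalar function space V with seminorms q. Functionals are
  represented extensionally (value 0 outside V).\<close>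
definition fdual :: "('o \<Rightarrow> 'k::real_normed_field) set \<Rightarrow> ('i \<Rightarrow> ('o \<Rightarrow> 'k) \<Rightarrow> real)
    \<Rightarrow> (('o \<Rightarrow> 'k) \<Rightarrow> 'k) set" where
  "fdual V q = {y. (\<forall>f\<in>V. \<forall>g\<in>V. y (\<lambda>t. f t + g t) = y f + y g) \<and>
       (\<forall>c. \<forall>f\<in>V. y (\<lambda>t. c * f t) = c * y f) \<and>
       continuous_map (seminorm_topology V fdiff UNIV q) euclidean y \<and>
       (\<forall>f. f \<notin> V \<longrightarrow> y f = 0)}"

definition delta_on :: "('o \<Rightarrow> 'k::zero) set \<Rightarrow> 'o \<Rightarrow> ('o \<Rightarrow> 'k) \<Rightarrow> 'k" where
  "delta_on V x = (\<lambda>f. if f \<in> V then f x else 0)"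

definition Tfunctional :: "('o \<Rightarrow> 'k::zero) set \<Rightarrow> ('m \<Rightarrow> ('o \<Rightarrow> 'k) \<Rightarrow> 'w \<Rightarrow> 'k) \<Rightarrow> 'm \<Rightarrow> 'w
    \<Rightarrow> ('o \<Rightarrow> 'k) \<Rightarrow> 'k" where
  "Tfunctional V T m x = (\<lambda>f. if f \<in> V then T m f x else 0)"

definition acx_compacts :: "('o \<Rightarrow> 'k::real_normed_field) set \<Rightarrow> ('i \<Rightarrow> ('o \<Rightarrow> 'k) \<Rightarrow> real)
    \<Rightarrow> ('o \<Rightarrow> 'k) set set" where
  "acx_compacts V q = {B. B \<subseteq> V \<and> compactin (seminorm_topology V fdiff UNIV q) B \<and>
      (\<forall>f\<in>B. \<forall>g\<in>B. \<forall>a b. norm a + norm b \<le> 1 \<longrightarrow> (\<lambda>t. a * f t + b * g t) \<in> B)}"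

definition kappa_sn :: "('o \<Rightarrow> 'k::real_normed_field) set \<Rightarrow> ((('o \<Rightarrow> 'k) \<Rightarrow> 'k) \<Rightarrow> real)" where
  "kappa_sn B y = Sup (insert 0 ((\<lambda>f. norm (y f)) ` B))"

definition eps_prod :: "('o \<Rightarrow> 'k::real_normed_field) set \<Rightarrow> ('i \<Rightarrow> ('o \<Rightarrow> 'k) \<Rightarrow> real)
    \<Rightarrow> ('k \<Rightarrow> 'e::ab_group_add \<Rightarrow> 'e) \<Rightarrow> ('a \<Rightarrow> 'e \<Rightarrow> real) \<Rightarrow> ((('o \<Rightarrow> 'k) \<Rightarrow> 'k) \<Rightarrow> 'e) set" where
  "eps_prod V q sc p = {u.
     (\<forall>y1\<in>fdual V q. \<forall>y2\<in>fdual V q. u (\<lambda>f. y1 f + y2 f) = u y1 + u y2) \<and>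
     (\<forall>c. \<forall>y\<in>fdual V q. u (\<lambda>f. c * y f) = sc c (u y)) \<and>
     continuous_map (seminorm_topology (fdual V q) fdiff (acx_compacts V q) kappa_sn)
                    (seminorm_topology UNIV (-) UNIV p) u}"

definition S_map :: "('o \<Rightarrow> 'k::zero) set \<Rightarrow> ((('o \<Rightarrow> 'k) \<Rightarrow> 'k) \<Rightarrow> 'e) \<Rightarrow> 'o \<Rightarrow> 'e" where
  "S_map V u = (\<lambda>x. u (delta_on V x))"

definition Edual :: "('k::real_normed_field \<Rightarrow> 'e::ab_group_add \<Rightarrow> 'e) \<Rightarrow> ('a \<Rightarrow> 'e \<Rightarrow> real)
    \<Rightarrow> ('e \<Rightarrow> 'k) set" where
  "Edual sc p = {e'. (\<forall>a b. e' (a + b) = e' a + e' b) \<and> (\<forall>c a. e' (sc c a) = c * e' a) \<and>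
      continuous_map (seminorm_topology UNIV (-) UNIV p) euclidean e'}"

text \<open>rs r y is the multiplication of y by the real scalar r; the condition
  "sup ... < eps" is written as the existence of a bound c < eps (with sup of the empty set 0).\<close>
definition AP_pi :: "('w \<Rightarrow> 'x) \<Rightarrow> 'x set set \<Rightarrow> ('m \<Rightarrow> 'w set) \<Rightarrow> ('j \<Rightarrow> 'm \<Rightarrow> 'w \<Rightarrow> real)
    \<Rightarrow> ('m \<Rightarrow> ('o \<Rightarrow> 'y) set) \<Rightarrow> ('m \<Rightarrow> ('o \<Rightarrow> 'y) \<Rightarrow> 'w \<Rightarrow> 'y) \<Rightarrow> ('a \<Rightarrow> 'y \<Rightarrow> real)
    \<Rightarrow> ('y \<Rightarrow> 'y \<Rightarrow> 'y) \<Rightarrow> (real \<Rightarrow> 'y \<Rightarrow> 'y) \<Rightarrow> ('o \<Rightarrow> 'y) set" where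
  "AP_pi \<pi> \<KK> \<omega> \<nu> domT T q diff rs = {f. (\<forall>m. f \<in> domT m) \<and>
     (\<forall>\<epsilon>>0. \<forall>j m \<alpha>. \<exists>K\<in>\<KK>.
        (\<exists>c<\<epsilon>. \<forall>x\<in>\<omega> m. \<pi> x \<notin> K \<longrightarrow> q \<alpha> (T m f x) * \<nu> j m x \<le> c) \<and>
        precompact_sn diff q {rs (\<nu> j m x) (T m f x) | x. x \<in> \<omega> m \<and> \<pi> x \<in> K})}"

end

theory Submission
  imports Defs
begin

text \<open>
  (1) Continuity of \<open>u\<close> on the dual of \<open>FV(\<Omega>)\<close> gives, for each seminorm \<open>p\<^sub>\<alpha>\<close> of \<open>E\<close>, a compact
  set \<open>B \<subseteq> FV(\<Omega>)\<close> and \<open>\<eta> > 0\<close> with \<open>p\<^sub>\<alpha>(u y) < s\<close> whenever \<open>|y| \<le> \<eta> s\<close> on \<open>B\<close>. Applied to the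
  functionals \<open>a T\<^sub>m\<^sub>,\<^sub>x + b T\<^sub>m\<^sub>,\<^sub>x\<^sub>'\<close>, this bounds the values \<open>u(T\<^sub>m\<^sub>,\<^sub>x) = T\<^sup>E\<^sub>m(S u)(x)\<close> by the values
  of the members of \<open>B\<close> at \<open>x\<close> and \<open>x'\<close>. Being compact, \<open>B\<close> is totally bounded for every
  weighted seminorm, so finitely many of its members approximate all of it uniformly on \<open>\<omega>\<^sub>m\<close>.
  These finitely many functions lie in \<open>AP\<^sub>\<pi>\<^sub>,\<^sub>\<KK>(\<Omega>)\<close>: the union of their sets \<open>K\<close> controls the
  tail of \<open>S u\<close>, and their precompact weighted ranges make the weighted range of \<open>S u\<close>
  precompact.
  (2) A continuous functional \<open>e'\<close> is dominated by a single seminorm of \<open>E\<close>, hence uniformly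
  continuous: it keeps tails small and maps precompact sets to precompact sets.
\<close>

section \<open>Topologies generated by seminorms\<close>

lemma istopology_seminorm_balls:
  fixes q :: "'i \<Rightarrow> 'w \<Rightarrow> real"
  shows "istopology (\<lambda>U. U \<subseteq> V \<and> (\<forall>x\<in>U. \<exists>F \<epsilon>. finite F \<and> F \<subseteq> I \<and> \<epsilon> > 0 \<and>
      {y \<in> V. \<forall>i\<in>F. q i (diff y x) < \<epsilon>} \<subseteq> U))"
    (is "istopology ?open")
  unfolding istopology_def
proof (rule conjI; intro allI impI)
  fix S T assume S: "?open S" and T: "?open T"
  show "?open (S \<inter> T)"
  proof (intro conjI ballI)
    fix x assume x: "x \<in> S \<inter> T"
    obtain F1 \<epsilon>1 where F1: "finite F1" "F1 \<subseteq> I" "\<epsilon>1 > 0"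
      and sub1: "{y \<in> V. \<forall>i\<in>F1. q i (diff y x) < \<epsilon>1} \<subseteq> S"
      using bspec[OF conjunct2[OF S] IntD1[OF x]] by (elim exE conjE)
    obtain F2 \<epsilon>2 where F2: "finite F2" "F2 \<subseteq> I" "\<epsilon>2 > 0"
      and sub2: "{y \<in> V. \<forall>i\<in>F2. q i (diff y x) < \<epsilon>2} \<subseteq> T"
      using bspec[OF conjunct2[OF T] IntD2[OF x]] by (elim exE conjE)
    have "{y \<in> V. \<forall>i\<in>F1 \<union> F2. q i (diff y x) < min \<epsilon>1 \<epsilon>2} \<subseteq> S \<inter> T"
    proof
      fix y assume "y \<in> {y \<in> V. \<forall>i\<in>F1 \<union> F2. q i (diff y x) < min \<epsilon>1 \<epsilon>2}"
      then have "y \<in> {y \<in> V. \<forall>i\<in>F1. q i (diff y x) < \<epsilon>1}" "y \<in> {y \<in> V. \<forall>i\<in>F2. q i (diff y x) < \<epsilon>2}"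
        by auto
      then show "y \<in> S \<inter> T" using sub1 sub2 by blast
    qed
    moreover have "finite (F1 \<union> F2)" "F1 \<union> F2 \<subseteq> I" "min \<epsilon>1 \<epsilon>2 > 0" using F1 F2 by auto
    ultimately show "\<exists>F \<epsilon>. finite F \<and> F \<subseteq> I \<and> \<epsilon> > 0 \<and> {y \<in> V. \<forall>i\<in>F. q i (diff y x) < \<epsilon>} \<subseteq> S \<inter> T"
      by (intro exI[of _ "F1 \<union> F2"] exI[of _ "min \<epsilon>1 \<epsilon>2"] conjI) assumption+
  qed (use S in blast)
next
  fix \<U> assume \<U>: "\<forall>U\<in>\<U>. ?open U"
  show "?open (\<Union>\<U>)"
  proof (intro conjI ballI)
    fix x assume "x \<in> \<Union>\<U>"
    then obtain U where U: "U \<in> \<U>" "x \<in> U" by blast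
    obtain F \<epsilon> where "finite F" "F \<subseteq> I" "\<epsilon> > 0" and sub: "{y \<in> V. \<forall>i\<in>F. q i (diff y x) < \<epsilon>} \<subseteq> U"
      using bspec[OF conjunct2[OF bspec[OF \<U> U(1)]] U(2)] by (elim exE conjE)
    moreover have "{y \<in> V. \<forall>i\<in>F. q i (diff y x) < \<epsilon>} \<subseteq> \<Union>\<U>" using sub U(1) by blast
    ultimately show "\<exists>F \<epsilon>. finite F \<and> F \<subseteq> I \<and> \<epsilon> > 0 \<and> {y \<in> V. \<forall>i\<in>F. q i (diff y x) < \<epsilon>} \<subseteq> \<Union>\<U>"
      by (intro exI[of _ F] exI[of _ \<epsilon>] conjI) assumption+
  qed (use \<U> in blast)
qed

lemma openin_seminorm_topology:
  "openin (seminorm_topology V diff I q) U \<longleftrightarrow> U \<subseteq> V \<and> (\<forall>x\<in>U. \<exists>F \<epsilon>. finite F \<and> F \<subseteq> I \<and> \<epsilon> > 0 \<and>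
        {y \<in> V. \<forall>i\<in>F. q i (diff y x) < \<epsilon>} \<subseteq> U)"
  unfolding seminorm_topology_def topology_inverse'[OF istopology_seminorm_balls] by simp

lemma topspace_seminorm_topology [simp]: "topspace (seminorm_topology V diff I q) = V"
proof -
  have "openin (seminorm_topology V diff I q) V"
    unfolding openin_seminorm_topology by (intro conjI ballI exI[of _ "{}"] exI[of _ 1]) auto
  moreover have "\<And>U. openin (seminorm_topology V diff I q) U \<Longrightarrow> U \<subseteq> V"
    unfolding openin_seminorm_topology by blast
  ultimately show ?thesis unfolding topspace_def by blast
qed

lemma continuous_map_seminorm_topologyD:
  assumes "continuous_map (seminorm_topology V diff I q) Y f" "openin Y W" "x \<in> V" "f x \<in> W"
  shows "\<exists>F \<epsilon>. finite F \<and> F \<subseteq> I \<and> \<epsilon> > 0 \<and> (\<forall>y\<in>V. (\<forall>i\<in>F. q i (diff y x) < \<epsilon>) \<longrightarrow> f y \<in> W)"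
proof -
  have "openin (seminorm_topology V diff I q) {y \<in> V. f y \<in> W}"
    using assms(1,2) unfolding continuous_map_def topspace_seminorm_topology by blast
  moreover have "x \<in> {y \<in> V. f y \<in> W}" using assms(3,4) by simp
  ultimately obtain F \<epsilon> where "finite F" "F \<subseteq> I" "\<epsilon> > 0"
    and sub: "{y \<in> V. \<forall>i\<in>F. q i (diff y x) < \<epsilon>} \<subseteq> {y \<in> V. f y \<in> W}"
    unfolding openin_seminorm_topology by (elim conjE bspec[elim_format] exE)
  moreover have "\<forall>y\<in>V. (\<forall>i\<in>F. q i (diff y x) < \<epsilon>) \<longrightarrow> f y \<in> W"
    using sub by blast
  ultimately show ?thesis by blast
qed

lemma continuous_map_seminorm_topologyI:
  fixes \<phi> :: "'v \<Rightarrow> 'k::real_normed_vector"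
  assumes bound: "\<And>f g. f \<in> V \<Longrightarrow> g \<in> V \<Longrightarrow> norm (\<phi> f - \<phi> g) \<le> C * q i (diff f g)"
    and "C \<ge> 0" and "i \<in> I"
  shows "continuous_map (seminorm_topology V diff I q) euclidean \<phi>"
  unfolding continuous_map topspace_seminorm_topology openin_seminorm_topology
proof (intro conjI allI impI ballI)
  fix U :: "'k set" and x assume "openin euclidean U" and "x \<in> {x \<in> V. \<phi> x \<in> U}"
  then have x: "x \<in> V" "\<phi> x \<in> U" and "open U" by simp_all
  then obtain r where r: "r > 0" "ball (\<phi> x) r \<subseteq> U"
    using open_contains_ball by blast
  have "{y \<in> V. \<forall>i'\<in>{i}. q i' (diff y x) < r / (C + 1)} \<subseteq> {x \<in> V. \<phi> x \<in> U}"
  proof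
    fix y assume "y \<in> {y \<in> V. \<forall>i'\<in>{i}. q i' (diff y x) < r / (C + 1)}"
    then have y: "y \<in> V" "q i (diff y x) < r / (C + 1)" by auto
    have "norm (\<phi> y - \<phi> x) \<le> C * q i (diff y x)" using bound y(1) x(1) .
    also have "\<dots> \<le> C * (r / (C + 1))" using y(2) \<open>C \<ge> 0\<close> by (intro mult_left_mono) auto
    also have "\<dots> < r" using r(1) \<open>C \<ge> 0\<close> by (simp add: field_simps)
    finally have "\<phi> y \<in> ball (\<phi> x) r" by (simp add: dist_norm norm_minus_commute)
    then show "y \<in> {x \<in> V. \<phi> x \<in> U}" using r(2) y(1) by blast
  qed
  moreover have "r / (C + 1) > 0" using r(1) \<open>C \<ge> 0\<close> by simp
  ultimately show "\<exists>F \<epsilon>. finite F \<and> F \<subseteq> I \<and> \<epsilon> > 0 \<and> {y \<in> V. \<forall>i\<in>F. q i (diff y x) < \<epsilon>} \<subseteq> {x \<in> V. \<phi> x \<in> U}"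
    using \<open>i \<in> I\<close> by (intro exI[of _ "{i}"] exI[of _ "r / (C + 1)"]) simp
qed auto

lemma compactin_seminorm_topology_finite_net:
  fixes q :: "'i \<Rightarrow> 'w \<Rightarrow> real"
  assumes B: "compactin (seminorm_topology V diff I q) B" and "i \<in> I" and "\<rho> > 0"
    and triangle: "\<And>f g h. f \<in> V \<Longrightarrow> g \<in> V \<Longrightarrow> h \<in> V \<Longrightarrow>
      q i (diff f g) \<le> q i (diff f h) + q i (diff h g)"
    and self: "\<And>f. f \<in> V \<Longrightarrow> q i (diff f f) \<le> 0"
  shows "\<exists>N. finite N \<and> N \<subseteq> B \<and> (\<forall>f\<in>B. \<exists>l\<in>N. q i (diff f l) < \<rho>)"
proof -
  define ball where "ball g = {f \<in> V. q i (diff f g) < \<rho>}" for g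
  have "openin (seminorm_topology V diff I q) (ball g)" if g: "g \<in> V" for g
    unfolding openin_seminorm_topology
  proof (intro conjI ballI)
    show "ball g \<subseteq> V" by (auto simp: ball_def)
    fix f assume "f \<in> ball g"
    then have f: "f \<in> V" "q i (diff f g) < \<rho>" by (auto simp: ball_def)
    have "{h \<in> V. \<forall>i'\<in>{i}. q i' (diff h f) < \<rho> - q i (diff f g)} \<subseteq> ball g"
    proof
      fix h assume "h \<in> {h \<in> V. \<forall>i'\<in>{i}. q i' (diff h f) < \<rho> - q i (diff f g)}"
      then have h: "h \<in> V" "q i (diff h f) < \<rho> - q i (diff f g)" by auto
      have "q i (diff h g) \<le> q i (diff h f) + q i (diff f g)" using triangle h(1) g f(1) .
      then show "h \<in> ball g" using h by (simp add: ball_def)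
    qed
    then show "\<exists>F \<epsilon>. finite F \<and> F \<subseteq> I \<and> \<epsilon> > 0 \<and> {h \<in> V. \<forall>i\<in>F. q i (diff h f) < \<epsilon>} \<subseteq> ball g"
      using \<open>i \<in> I\<close> f(2) by (intro exI[of _ "{i}"] exI[of _ "\<rho> - q i (diff f g)"]) simp
  qed
  moreover have BV: "B \<subseteq> V"
    using compactin_subset_topspace[OF B] by simp
  ultimately have "\<forall>U\<in>ball ` B. openin (seminorm_topology V diff I q) U" by blast
  moreover have "B \<subseteq> \<Union>(ball ` B)"
  proof
    fix f assume "f \<in> B"
    then have "f \<in> ball f" using BV self \<open>\<rho> > 0\<close> by (force simp: ball_def)
    then show "f \<in> \<Union>(ball ` B)" using \<open>f \<in> B\<close> by blast
  qed
  ultimately obtain \<F> where "finite \<F>" "\<F> \<subseteq> ball ` B" "B \<subseteq> \<Union>\<F>"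
    using B unfolding compactin_def by meson
  then obtain N where "finite N" "N \<subseteq> B" "B \<subseteq> \<Union>(ball ` N)"
    by (metis finite_subset_image)
  moreover have "\<forall>f\<in>B. \<exists>l\<in>N. q i (diff f l) < \<rho>" using \<open>B \<subseteq> \<Union>(ball ` N)\<close> by (auto simp: ball_def)
  ultimately show ?thesis by blast
qed

section \<open>Precompact sets and the space \<open>AP\<^sub>\<pi>\<^sub>,\<^sub>\<KK>\<close>\<close>

abbreviation norm_seminorm :: "unit \<Rightarrow> 'a::real_normed_vector \<Rightarrow> real"
  where "norm_seminorm \<equiv> \<lambda>_ t. norm t"

lemma precompact_sn_subset: "precompact_sn diff q A \<Longrightarrow> B \<subseteq> A \<Longrightarrow> precompact_sn diff q B"
  unfolding precompact_sn_def by (meson order_trans)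

lemma precompact_sn_image_norm:
  fixes \<phi> :: "'v \<Rightarrow> 'k::real_normed_vector"
  assumes A: "precompact_sn diff q A"
    and uniform: "\<And>\<delta>. \<delta> > 0 \<Longrightarrow> \<exists>F \<epsilon>. finite F \<and> \<epsilon> > 0 \<and>
      (\<forall>a b. (\<forall>i\<in>F. q i (diff a b) < \<epsilon>) \<longrightarrow> norm (\<phi> a - \<phi> b) < \<delta>)"
  shows "precompact_sn (-) norm_seminorm (\<phi> ` A)"
  unfolding precompact_sn_def
proof (intro allI impI)
  fix F' :: "unit set" and \<delta> :: real assume "finite F' \<and> \<delta> > 0"
  then obtain F \<epsilon> where F: "finite F \<and> \<epsilon> > 0"
    and close: "\<forall>a b. (\<forall>i\<in>F. q i (diff a b) < \<epsilon>) \<longrightarrow> norm (\<phi> a - \<phi> b) < \<delta>"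
    using uniform[of \<delta>] by auto
  obtain G where "finite G" and cover: "A \<subseteq> (\<Union>g\<in>G. {a. \<forall>i\<in>F. q i (diff a g) < \<epsilon>})"
    using A[unfolded precompact_sn_def, rule_format, OF F] by blast
  have "\<phi> ` A \<subseteq> (\<Union>g\<in>\<phi> ` G. {y. \<forall>i\<in>F'. norm (y - g) < \<delta>})"
  proof
    fix y assume "y \<in> \<phi> ` A"
    then obtain a where a: "y = \<phi> a" "a \<in> A" by blast
    then obtain g where "g \<in> G" "\<forall>i\<in>F. q i (diff a g) < \<epsilon>"
      using cover by blast
    then show "y \<in> (\<Union>g\<in>\<phi> ` G. {y. \<forall>i\<in>F'. norm (y - g) < \<delta>})"
      using close a(1) by blast
  qed
  then show "\<exists>G. finite G \<and> \<phi> ` A \<subseteq> (\<Union>g\<in>G. {y. \<forall>i\<in>F'. norm (y - g) < \<delta>})"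
    using \<open>finite G\<close> by (intro exI[of _ "\<phi> ` G"]) simp
qed

text \<open>If finitely many functions have totally bounded ranges, then finitely many points of
  the common domain approximate every point simultaneously in all of them: group the points
  by the tuple of their nearest net points and pick one representative per tuple.\<close>
lemma finite_family_common_net:
  fixes h :: "'l \<Rightarrow> 'w \<Rightarrow> 'k::real_normed_vector"
  assumes "finite N" and nets: "\<forall>l\<in>N. \<exists>G. finite G \<and> (\<forall>x\<in>W. \<exists>v\<in>G. norm (h l x - v) < r)"
  shows "\<exists>W0. finite W0 \<and> W0 \<subseteq> W \<and> (\<forall>x\<in>W. \<exists>x'\<in>W0. \<forall>l\<in>N. norm (h l x - h l x') < 2 * r)"
proof -
  obtain G where G: "\<forall>l\<in>N. finite (G l) \<and> (\<forall>x\<in>W. \<exists>v\<in>G l. norm (h l x - v) < r)"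
    using bchoice[OF nets] by blast
  define \<sigma> where "\<sigma> x = restrict (\<lambda>l. SOME v. v \<in> G l \<and> norm (h l x - v) < r) N" for x
  have \<sigma>: "\<sigma> x l \<in> G l \<and> norm (h l x - \<sigma> x l) < r" if "x \<in> W" "l \<in> N" for x l
    unfolding \<sigma>_def using someI_ex[of "\<lambda>v. v \<in> G l \<and> norm (h l x - v) < r"] G that by auto
  have "\<sigma> ` W \<subseteq> PiE N G" using \<sigma> by (auto simp: \<sigma>_def)
  moreover have "finite (PiE N G)" using \<open>finite N\<close> G by (simp add: finite_PiE)
  ultimately have "finite (\<sigma> ` W)" by (rule finite_subset)
  define rep where "rep t = (SOME x. x \<in> W \<and> \<sigma> x = t)" for t
  have rep: "rep (\<sigma> x) \<in> W \<and> \<sigma> (rep (\<sigma> x)) = \<sigma> x" if "x \<in> W" for x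
    unfolding rep_def using someI[of "\<lambda>x'. x' \<in> W \<and> \<sigma> x' = \<sigma> x" x] that by blast
  have cover: "\<exists>x'\<in>rep ` \<sigma> ` W. \<forall>l\<in>N. norm (h l x - h l x') < 2 * r" if x: "x \<in> W" for x
  proof (intro bexI ballI)
    fix l assume l: "l \<in> N"
    have "norm (h l x - h l (rep (\<sigma> x))) \<le> norm (h l x - \<sigma> x l) + norm (h l (rep (\<sigma> x)) - \<sigma> x l)"
      using norm_triangle_ineq4[of "h l x - \<sigma> x l" "h l (rep (\<sigma> x)) - \<sigma> x l"] by simp
    also have "\<dots> < 2 * r" using \<sigma>[OF x l] \<sigma>[OF conjunct1[OF rep[OF x]] l] rep[OF x] by simp
    finally show "norm (h l x - h l (rep (\<sigma> x))) < 2 * r" .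
  qed (use x in blast)
  moreover have "finite (rep ` \<sigma> ` W)" using \<open>finite (\<sigma> ` W)\<close> by simp
  moreover have "rep ` \<sigma> ` W \<subseteq> W" using rep by blast
  ultimately show ?thesis by blast
qed

lemma norm_mult_diff_le_via:
  fixes a b t t' l l' :: "'a::real_normed_algebra"
  shows "norm (a * t - b * t') \<le> norm (a * (t - l)) + norm (a * l - b * l') + norm (b * (l' - t'))"
proof -
  have "a * t - b * t' = a * (t - l) + (a * l - b * l') + b * (l' - t')" by (simp add: algebra_simps)
  then have "norm (a * t - b * t') \<le> norm (a * (t - l) + (a * l - b * l')) + norm (b * (l' - t'))"
    by (simp only: norm_triangle_ineq)
  also have "\<dots> \<le> norm (a * (t - l)) + norm (a * l - b * l') + norm (b * (l' - t'))"
    by (rule add_right_mono[OF norm_triangle_ineq])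
  finally show ?thesis .
qed

lemma AP_piD:
  assumes "f \<in> AP_pi \<pi> \<KK> \<omega> \<nu> domT T q diff rs" "\<epsilon> > 0"
  shows "\<exists>K\<in>\<KK>. (\<exists>c<\<epsilon>. \<forall>x\<in>\<omega> m. \<pi> x \<notin> K \<longrightarrow> q \<alpha> (T m f x) * \<nu> j m x \<le> c) \<and>
    precompact_sn diff q {rs (\<nu> j m x) (T m f x) | x. x \<in> \<omega> m \<and> \<pi> x \<in> K}"
  using assms unfolding AP_pi_def by blast

lemma Un_Union_image_mem:
  assumes union_closed: "\<And>K1 K2. K1 \<in> \<KK> \<Longrightarrow> K2 \<in> \<KK> \<Longrightarrow> K1 \<union> K2 \<in> \<KK>"
    and "K0 \<in> \<KK>" and "finite N" and "\<And>l. l \<in> N \<Longrightarrow> Kf l \<in> \<KK>"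
  shows "K0 \<union> \<Union>(Kf ` N) \<in> \<KK>"
  using \<open>finite N\<close> \<open>\<And>l. l \<in> N \<Longrightarrow> Kf l \<in> \<KK>\<close>
proof (induction rule: finite_induct)
  case (insert l N)
  then have "(K0 \<union> \<Union>(Kf ` N)) \<union> Kf l \<in> \<KK>" by (simp add: union_closed)
  then show ?case by (simp add: Un_ac)
qed (simp add: \<open>K0 \<in> \<KK>\<close>)

lemma AP_pi_tail:
  fixes T :: "'m \<Rightarrow> ('o \<Rightarrow> 'k) \<Rightarrow> 'w \<Rightarrow> 'k::real_normed_vector"
  assumes "f \<in> AP_pi \<pi> \<KK> \<omega> \<nu> domT T norm_seminorm diff rs" "\<rho> > 0"
  shows "\<exists>K\<in>\<KK>. \<forall>x\<in>\<omega> m. \<pi> x \<notin> K \<longrightarrow> norm (T m f x) * \<nu> j m x < \<rho>"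
proof -
  obtain K c where "K \<in> \<KK>" "c < \<rho>" and tail: "\<forall>x\<in>\<omega> m. \<pi> x \<notin> K \<longrightarrow> norm (T m f x) * \<nu> j m x \<le> c"
    using AP_piD[OF assms, where m=m and j=j] by blast
  have "\<forall>x\<in>\<omega> m. \<pi> x \<notin> K \<longrightarrow> norm (T m f x) * \<nu> j m x < \<rho>"
  proof (intro ballI impI)
    fix x assume "x \<in> \<omega> m" "\<pi> x \<notin> K"
    then have "norm (T m f x) * \<nu> j m x \<le> c" using tail by blast
    then show "norm (T m f x) * \<nu> j m x < \<rho>" using \<open>c < \<rho>\<close> by linarith
  qed
  then show ?thesis using \<open>K \<in> \<KK>\<close> by blast
qed

lemma AP_pi_weighted_range_net:
  fixes T :: "'m \<Rightarrow> ('o \<Rightarrow> 'k) \<Rightarrow> 'w \<Rightarrow> 'k::real_normed_field"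
  assumes "f \<in> AP_pi \<pi> \<KK> \<omega> \<nu> domT T norm_seminorm (-) (\<lambda>r t. of_real r * t)" and "\<rho> > 0"
    and \<nu>: "\<And>x. x \<in> \<omega> m \<Longrightarrow> 0 \<le> \<nu> j m x"
  shows "\<exists>G. finite G \<and> (\<forall>x\<in>\<omega> m. \<exists>v\<in>G. norm (of_real (\<nu> j m x) * T m f x - v) < \<rho>)"
proof -
  obtain K c where "c < \<rho>" and tail: "\<forall>x\<in>\<omega> m. \<pi> x \<notin> K \<longrightarrow> norm (T m f x) * \<nu> j m x \<le> c"
    and pc: "precompact_sn (-) norm_seminorm {of_real (\<nu> j m x) * T m f x | x. x \<in> \<omega> m \<and> \<pi> x \<in> K}"
    using AP_piD[OF assms(1,2), where m=m and j=j] by blast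
  have "finite {()} \<and> \<rho> > 0" using \<open>\<rho> > 0\<close> by simp
  then obtain G where "finite G"
    and cover: "{of_real (\<nu> j m x) * T m f x | x. x \<in> \<omega> m \<and> \<pi> x \<in> K}
      \<subseteq> (\<Union>g\<in>G. {y. \<forall>i\<in>{()}. norm (y - g) < \<rho>})"
    using pc[unfolded precompact_sn_def, rule_format, OF \<open>finite {()} \<and> \<rho> > 0\<close>] by blast
  have "\<exists>v\<in>insert 0 G. norm (of_real (\<nu> j m x) * T m f x - v) < \<rho>" if x: "x \<in> \<omega> m" for x
  proof (cases "\<pi> x \<in> K")
    case True
    then have "of_real (\<nu> j m x) * T m f x \<in> {of_real (\<nu> j m x) * T m f x | x. x \<in> \<omega> m \<and> \<pi> x \<in> K}"
      using x by blast
    then have "of_real (\<nu> j m x) * T m f x \<in> (\<Union>g\<in>G. {y. \<forall>i\<in>{()}. norm (y - g) < \<rho>})"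
      using cover by (rule subsetD[rotated])
    then show ?thesis by auto
  next
    case False
    then have "norm (T m f x) * \<nu> j m x \<le> c" using tail x by blast
    then have "norm (of_real (\<nu> j m x) * T m f x - 0) < \<rho>"
      using \<nu>[OF x] \<open>c < \<rho>\<close> by (simp add: norm_mult mult.commute)
    then show ?thesis by blast
  qed
  then show ?thesis using \<open>finite G\<close> by (intro exI[of _ "insert 0 G"]) simp
qed

section \<open>Seminormed spaces and duals\<close>

lemma fdual_zero: "(\<lambda>_. 0) \<in> fdual V q"
  unfolding fdual_def by simp

lemma fdual_scale:
  assumes "y \<in> fdual V q" shows "(\<lambda>f. c * y f) \<in> fdual V q"
proof -
  have "continuous_map (seminorm_topology V fdiff UNIV q) euclidean y"
    using assms by (simp add: fdual_def)
  then have "continuous_map (seminorm_topology V fdiff UNIV q) euclidean (\<lambda>f. c * y f)"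
    by (simp add: continuous_map_atin tendsto_mult_left)
  with assms show ?thesis by (simp add: fdual_def algebra_simps)
qed

lemma fdual_add:
  assumes "y1 \<in> fdual V q" "y2 \<in> fdual V q" shows "(\<lambda>f. y1 f + y2 f) \<in> fdual V q"
  using assms by (simp add: fdual_def continuous_map_add algebra_simps)

lemma kappa_sn_le:
  assumes "c \<ge> 0" "\<And>f. f \<in> B \<Longrightarrow> norm (y f) \<le> c"
  shows "kappa_sn B y \<le> c"
  unfolding kappa_sn_def using assms by (intro cSup_least) auto

locale seminormed_space =
  fixes sc :: "'k::real_normed_field \<Rightarrow> 'e::ab_group_add \<Rightarrow> 'e" and p :: "'a \<Rightarrow> 'e \<Rightarrow> real"
  assumes vector_space: "vector_space sc"
    and triangle: "\<And>\<alpha> a b. p \<alpha> (a + b) \<le> p \<alpha> a + p \<alpha> b"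
    and homogeneous: "\<And>\<alpha> c a. p \<alpha> (sc c a) = norm c * p \<alpha> a"
    and directed: "\<And>\<alpha>1 \<alpha>2. \<exists>\<alpha>3 C. \<forall>a. max (p \<alpha>1 a) (p \<alpha>2 a) \<le> C * p \<alpha>3 a"
begin

sublocale E: vector_space sc by (rule vector_space)

lemma seminorm_zero [simp]: "p \<alpha> 0 = 0"
  using homogeneous[of \<alpha> 0 0] by simp

lemma seminorm_minus: "p \<alpha> (- a) = p \<alpha> a"
  using homogeneous[of \<alpha> "-1" a] by simp

lemma seminorm_nonneg: "0 \<le> p \<alpha> a"
  using triangle[of \<alpha> a "- a"] by (simp add: seminorm_minus)

lemma seminorm_diff_triangle: "p \<alpha> a \<le> p \<alpha> (a - b) + p \<alpha> b"
  using triangle[of \<alpha> "a - b" b] by simp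

lemma finite_seminorms_dominated:
  assumes "finite F"
  shows "\<exists>\<alpha> C. C \<ge> 0 \<and> (\<forall>i\<in>F. \<forall>a. p i a \<le> C * p \<alpha> a)"
  using assms
proof (induction rule: finite_induct)
  case (insert i0 F)
  then obtain \<alpha> C where C: "C \<ge> 0" "\<And>i a. i \<in> F \<Longrightarrow> p i a \<le> C * p \<alpha> a" by blast
  obtain \<alpha>' C' where C': "\<And>a. max (p i0 a) (p \<alpha> a) \<le> C' * p \<alpha>' a" using directed by blast
  define D where "D = max C' 0"
  have D: "p i0 a \<le> D * p \<alpha>' a" "p \<alpha> a \<le> D * p \<alpha>' a" "0 \<le> D * p \<alpha>' a" for a
    using C'[of a] mult_right_mono[OF max.cobounded1[of C' 0] seminorm_nonneg[of \<alpha>' a]]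
    unfolding D_def by (auto simp: seminorm_nonneg)
  have "p i a \<le> (1 + C) * D * p \<alpha>' a" if "i \<in> insert i0 F" for i a
  proof -
    have split: "(1 + C) * D * p \<alpha>' a = D * p \<alpha>' a + C * (D * p \<alpha>' a)"
      by (simp add: algebra_simps)
    have "C * p \<alpha> a \<le> C * (D * p \<alpha>' a)" using D(2) C(1) by (rule mult_left_mono)
    moreover have "0 \<le> C * (D * p \<alpha>' a)" using C(1) D(3) by simp
    ultimately show ?thesis
      using that C(2)[of i a] D(1,3)[of a] unfolding split by (cases "i = i0") auto
  qed
  moreover have "0 \<le> (1 + C) * D" using C(1) by (simp add: D_def)
  ultimately show ?case by blast
qed (auto intro!: exI[of _ "0::real"])

lemma openin_seminorm_sublevel: "openin (seminorm_topology UNIV (-) UNIV p) {e. p \<alpha> e < r}"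
  unfolding openin_seminorm_topology
proof (intro conjI ballI)
  fix e0 assume "e0 \<in> {e. p \<alpha> e < r}"
  then have "r - p \<alpha> e0 > 0" by simp
  moreover have "{e \<in> UNIV. \<forall>i\<in>{\<alpha>}. p i (e - e0) < r - p \<alpha> e0} \<subseteq> {e. p \<alpha> e < r}"
  proof
    fix e assume "e \<in> {e \<in> UNIV. \<forall>i\<in>{\<alpha>}. p i (e - e0) < r - p \<alpha> e0}"
    then show "e \<in> {e. p \<alpha> e < r}" using seminorm_diff_triangle[of \<alpha> e e0] by simp
  qed
  ultimately show "\<exists>F \<epsilon>. finite F \<and> F \<subseteq> UNIV \<and> \<epsilon> > 0 \<and>
      {e \<in> UNIV. \<forall>i\<in>F. p i (e - e0) < \<epsilon>} \<subseteq> {e. p \<alpha> e < r}"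
    by (intro exI[of _ "{\<alpha>}"] exI[of _ "r - p \<alpha> e0"]) simp
qed simp

lemma Edual_bound:
  assumes "e' \<in> Edual sc p"
  shows "\<exists>\<alpha> \<eta>. \<eta> > 0 \<and> (\<forall>s a. s > 0 \<longrightarrow> p \<alpha> a < \<eta> * s \<longrightarrow> norm (e' a) < s)"
proof -
  have add: "e' (a + b) = e' a + e' b" and hom: "e' (sc c a) = c * e' a" for a b c
    using assms by (simp_all add: Edual_def)
  have cont: "continuous_map (seminorm_topology UNIV (-) UNIV p) euclidean e'"
    using assms by (simp add: Edual_def)
  have "e' 0 \<in> ball 0 1" using add[of 0 0] by simp
  moreover have "openin euclidean (ball (0::'k) 1)" by simp
  ultimately have "\<exists>F \<epsilon>. finite F \<and> F \<subseteq> UNIV \<and> \<epsilon> > 0 \<and>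
      (\<forall>a\<in>UNIV. (\<forall>i\<in>F. p i (a - 0) < \<epsilon>) \<longrightarrow> e' a \<in> ball 0 1)"
    by (intro continuous_map_seminorm_topologyD[OF cont _ UNIV_I])
  then obtain F \<epsilon> where F: "finite F" "\<epsilon> > 0"
    and small: "\<forall>a\<in>UNIV. (\<forall>i\<in>F. p i (a - 0) < \<epsilon>) \<longrightarrow> e' a \<in> ball 0 1"
    by blast
  obtain \<alpha> C where C: "C \<ge> 0" "\<forall>i\<in>F. \<forall>a. p i a \<le> C * p \<alpha> a"
    using finite_seminorms_dominated[OF F(1)] by blast
  define \<eta> where "\<eta> = \<epsilon> / (C + 1)"
  have "\<eta> > 0" using F(2) C(1) by (simp add: \<eta>_def)
  moreover have "norm (e' a) < s" if s: "s > 0" and a: "p \<alpha> a < \<eta> * s" for s a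
  proof -
    define b where "b = sc (of_real (1 / s)) a"
    have "p \<alpha> b < \<eta>" using s a by (simp add: b_def homogeneous norm_divide field_simps)
    then have "C * p \<alpha> b \<le> C * \<eta>" using C(1) by (intro mult_left_mono) auto
    also have "\<dots> < \<epsilon>" using F(2) C(1) by (simp add: \<eta>_def field_simps)
    finally have "C * p \<alpha> b < \<epsilon>" .
    have "\<forall>i\<in>F. p i (b - 0) < \<epsilon>"
    proof
      fix i assume "i \<in> F"
      then have "p i b \<le> C * p \<alpha> b" using C(2) by blast
      then show "p i (b - 0) < \<epsilon>" using \<open>C * p \<alpha> b < \<epsilon>\<close> by simp
    qed
    then have "norm (e' b) < 1" using small by simp
    then show "norm (e' a) < s" using s by (simp add: b_def hom norm_mult norm_divide field_simps)
  qed
  ultimately show ?thesis by blast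
qed

lemma eps_prod_bound:
  assumes u: "u \<in> eps_prod V q sc p"
  shows "\<exists>\<eta> B. \<eta> > 0 \<and> B \<subseteq> V \<and> compactin (seminorm_topology V fdiff UNIV q) B \<and>
    (\<forall>y\<in>fdual V q. \<forall>s>0. (\<forall>f\<in>B. norm (y f) \<le> \<eta> * s) \<longrightarrow> p \<alpha> (u y) < s)"
proof -
  have u_scale: "u (\<lambda>f. c * y f) = sc c (u y)" if "y \<in> fdual V q" for c y
    using u that by (simp add: eps_prod_def)
  have cont: "continuous_map (seminorm_topology (fdual V q) fdiff (acx_compacts V q) kappa_sn)
      (seminorm_topology UNIV (-) UNIV p) u"
    using u by (simp add: eps_prod_def)
  have "u (\<lambda>_. 0) = sc 0 (u (\<lambda>_. 0))" using u_scale[OF fdual_zero, of 0] by simp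
  then have "u (\<lambda>_. 0) \<in> {e. p \<alpha> e < 1}" by simp
  then have "\<exists>\<B> \<epsilon>. finite \<B> \<and> \<B> \<subseteq> acx_compacts V q \<and> \<epsilon> > 0 \<and> (\<forall>y\<in>fdual V q.
      (\<forall>B\<in>\<B>. kappa_sn B (fdiff y (\<lambda>_. 0)) < \<epsilon>) \<longrightarrow> u y \<in> {e. p \<alpha> e < 1})"
    by (intro continuous_map_seminorm_topologyD[OF cont openin_seminorm_sublevel fdual_zero])
  then obtain \<B> \<epsilon> where \<B>: "finite \<B>" "\<B> \<subseteq> acx_compacts V q" and "\<epsilon> > 0"
    and small: "\<forall>y\<in>fdual V q. (\<forall>B\<in>\<B>. kappa_sn B (fdiff y (\<lambda>_. 0)) < \<epsilon>) \<longrightarrow> p \<alpha> (u y) < 1"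
    by auto
  have bound: "\<forall>y\<in>fdual V q. \<forall>s>0. (\<forall>f\<in>\<Union>\<B>. norm (y f) \<le> \<epsilon> / 2 * s) \<longrightarrow> p \<alpha> (u y) < s"
  proof (intro ballI allI impI)
    fix y s assume y: "y \<in> fdual V q" and s: "s > 0" and yB: "\<forall>f\<in>\<Union>\<B>. norm (y f) \<le> \<epsilon> / 2 * s"
    define y' where "y' = (\<lambda>f. of_real (1 / s) * y f)"
    have "y' \<in> fdual V q" unfolding y'_def using y by (rule fdual_scale)
    moreover have "kappa_sn B (fdiff y' (\<lambda>_. 0)) < \<epsilon>" if "B \<in> \<B>" for B
    proof -
      have "norm (y' f) \<le> \<epsilon> / 2" if "f \<in> B" for f
        using yB \<open>B \<in> \<B>\<close> \<open>f \<in> B\<close> s by (auto simp: y'_def norm_mult norm_divide field_simps)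
      then have "kappa_sn B y' \<le> \<epsilon> / 2" using \<open>\<epsilon> > 0\<close> by (intro kappa_sn_le) auto
      then show ?thesis using \<open>\<epsilon> > 0\<close> by (simp add: fdiff_def)
    qed
    ultimately have "p \<alpha> (u y') < 1" using small by blast
    moreover have "u y' = sc (of_real (1 / s)) (u y)" unfolding y'_def by (rule u_scale[OF y])
    ultimately show "p \<alpha> (u y) < s" using s by (simp add: homogeneous norm_divide)
  qed
  have sub: "\<Union>\<B> \<subseteq> V" using \<B>(2) by (auto simp: acx_compacts_def)
  have compact: "compactin (seminorm_topology V fdiff UNIV q) (\<Union>\<B>)"
    using \<B> by (intro compactin_Union) (auto simp: acx_compacts_def)
  have "\<epsilon> / 2 > 0" using \<open>\<epsilon> > 0\<close> by simp
  with sub compact bound show ?thesis by blast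
qed

lemma Edual_precompact_image:
  assumes e': "e' \<in> Edual sc p" and A: "precompact_sn (-) p A"
  shows "precompact_sn (-) norm_seminorm (e' ` A)"
proof (rule precompact_sn_image_norm[OF A])
  obtain \<alpha> \<eta> where "\<eta> > 0" and bound: "\<forall>s a. s > 0 \<longrightarrow> p \<alpha> a < \<eta> * s \<longrightarrow> norm (e' a) < s"
    using Edual_bound[OF e'] by blast
  have add: "e' (a + b) = e' a + e' b" for a b
    using e' by (simp add: Edual_def)
  have diff: "e' (a - b) = e' a - e' b" for a b
    using add[of "a - b" b] by (simp add: algebra_simps)
  fix \<delta> :: real assume "\<delta> > 0"
  then have "\<forall>a b. (\<forall>i\<in>{\<alpha>}. p i (a - b) < \<eta> * \<delta>) \<longrightarrow> norm (e' a - e' b) < \<delta>"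
    using bound by (simp flip: diff)
  then show "\<exists>F \<epsilon>. finite F \<and> \<epsilon> > 0 \<and> (\<forall>a b. (\<forall>i\<in>F. p i (a - b) < \<epsilon>) \<longrightarrow> norm (e' a - e' b) < \<delta>)"
    using \<open>\<delta> > 0\<close> \<open>\<eta> > 0\<close> by (intro exI[of _ "{\<alpha>}"] exI[of _ "\<eta> * \<delta>"]) simp
qed

lemma Edual_comp_AP_pi:
  assumes e': "e' \<in> Edual sc p"
    and f: "f \<in> AP_pi \<pi> \<KK> \<omega> \<nu> domTE TE p (-) (\<lambda>r a. sc (of_real r) a)"
    and dom: "\<And>m. g \<in> domTK m"
    and T: "\<And>m x. x \<in> \<omega> m \<Longrightarrow> TK m g x = e' (TE m f x)"
    and \<nu>: "\<And>j m x. x \<in> \<omega> m \<Longrightarrow> 0 \<le> \<nu> j m x"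
  shows "g \<in> AP_pi \<pi> \<KK> \<omega> \<nu> domTK TK norm_seminorm (-) (\<lambda>r t. of_real r * t)"
proof -
  obtain \<alpha> \<eta> where "\<eta> > 0" and bound: "\<forall>s a. s > 0 \<longrightarrow> p \<alpha> a < \<eta> * s \<longrightarrow> norm (e' a) < s"
    using Edual_bound[OF e'] by blast
  have hom: "e' (sc c a) = c * e' a" for a c
    using e' by (simp add: Edual_def)
  show ?thesis unfolding AP_pi_def mem_Collect_eq
  proof (intro conjI allI impI)
    fix \<epsilon> :: real and j m and \<beta> :: unit assume "\<epsilon> > 0"
    then obtain K c where K: "K \<in> \<KK>" and "c < \<eta> * (\<epsilon> / 2)"
      and tail: "\<And>x. x \<in> \<omega> m \<Longrightarrow> \<pi> x \<notin> K \<Longrightarrow> p \<alpha> (TE m f x) * \<nu> j m x \<le> c"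
      and pc: "precompact_sn (-) p {sc (of_real (\<nu> j m x)) (TE m f x) | x. x \<in> \<omega> m \<and> \<pi> x \<in> K}"
      using AP_piD[OF f, of "\<eta> * (\<epsilon> / 2)" m \<alpha> j] \<open>\<eta> > 0\<close> by auto
    have "norm (TK m g x) * \<nu> j m x \<le> \<epsilon> / 2" if "x \<in> \<omega> m" "\<pi> x \<notin> K" for x
    proof -
      have "p \<alpha> (sc (of_real (\<nu> j m x)) (TE m f x)) < \<eta> * (\<epsilon> / 2)"
        using tail[OF that] \<nu>[OF that(1)] \<open>c < \<eta> * (\<epsilon> / 2)\<close> by (simp add: homogeneous mult.commute)
      then have "norm (e' (sc (of_real (\<nu> j m x)) (TE m f x))) < \<epsilon> / 2"
        using bound \<open>\<epsilon> > 0\<close> half_gt_zero by blast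
      then show ?thesis using \<nu>[OF that(1)] by (simp add: T[OF that(1)] hom norm_mult mult.commute)
    qed
    then have tail': "\<exists>c<\<epsilon>. \<forall>x\<in>\<omega> m. \<pi> x \<notin> K \<longrightarrow> norm (TK m g x) * \<nu> j m x \<le> c"
      using \<open>\<epsilon> > 0\<close> by (intro exI[of _ "\<epsilon> / 2"]) auto
    have "{of_real (\<nu> j m x) * TK m g x | x. x \<in> \<omega> m \<and> \<pi> x \<in> K}
        = e' ` {sc (of_real (\<nu> j m x)) (TE m f x) | x. x \<in> \<omega> m \<and> \<pi> x \<in> K}"
      unfolding setcompr_eq_image image_image by (rule image_cong) (simp_all add: T hom)
    moreover have "precompact_sn (-) norm_seminorm
        (e' ` {sc (of_real (\<nu> j m x)) (TE m f x) | x. x \<in> \<omega> m \<and> \<pi> x \<in> K})"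
      by (rule Edual_precompact_image[OF e' pc])
    ultimately have "precompact_sn (-) norm_seminorm {of_real (\<nu> j m x) * TK m g x | x. x \<in> \<omega> m \<and> \<pi> x \<in> K}"
      by simp
    with tail' show "\<exists>K\<in>\<KK>. (\<exists>c<\<epsilon>. \<forall>x\<in>\<omega> m. \<pi> x \<notin> K \<longrightarrow> norm (TK m g x) * \<nu> j m x \<le> c) \<and>
        precompact_sn (-) norm_seminorm {of_real (\<nu> j m x) * TK m g x | x. x \<in> \<omega> m \<and> \<pi> x \<in> K}"
      using K by blast
  qed (rule dom)
qed

end

section \<open>The \<open>\<epsilon>\<close>-product\<close>

locale weighted_function_space =
  fixes AP :: "('o \<Rightarrow> 'k::real_normed_field) set" and domT :: "'m \<Rightarrow> ('o \<Rightarrow> 'k) set"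
    and T :: "'m \<Rightarrow> ('o \<Rightarrow> 'k) \<Rightarrow> 'w \<Rightarrow> 'k" and \<omega> :: "'m \<Rightarrow> 'w set"
    and \<nu> :: "'j \<Rightarrow> 'm \<Rightarrow> 'w \<Rightarrow> real"
  assumes \<omega>_nonempty: "\<And>m. \<omega> m \<noteq> {}"
    and \<nu>_nonneg: "\<And>j m x. x \<in> \<omega> m \<Longrightarrow> 0 \<le> \<nu> j m x"
    and \<nu>_pos: "\<And>m x. x \<in> \<omega> m \<Longrightarrow> \<exists>j. 0 < \<nu> j m x"
    and AP_subspace: "fsubspace (*) AP"
    and domT_subspace: "\<And>m. fsubspace (*) (domT m)"
    and T_linear: "\<And>m. flinear_on (*) (domT m) (\<omega> m) (T m)"
begin

abbreviation FVK :: "('o \<Rightarrow> 'k) set" where "FVK \<equiv> FV AP domT T \<omega> \<nu> norm_seminorm"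

abbreviation qK :: "'j \<times> 'm \<times> unit \<Rightarrow> ('o \<Rightarrow> 'k) \<Rightarrow> real" where "qK \<equiv> FVnorm T \<omega> \<nu> norm_seminorm"

lemma mem_FVK: "f \<in> FVK \<longleftrightarrow> f \<in> AP \<and> (\<forall>m. f \<in> domT m) \<and>
    (\<forall>j m. bdd_above ((\<lambda>x. norm (T m f x) * \<nu> j m x) ` \<omega> m))"
  by (simp add: FV_def)

lemma T_add: "f \<in> domT m \<Longrightarrow> g \<in> domT m \<Longrightarrow> x \<in> \<omega> m \<Longrightarrow> T m (\<lambda>t. f t + g t) x = T m f x + T m g x"
  using T_linear[of m] by (simp add: flinear_on_def)

lemma T_scale: "f \<in> domT m \<Longrightarrow> x \<in> \<omega> m \<Longrightarrow> T m (\<lambda>t. c * f t) x = c * T m f x"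
  using T_linear[of m] by (simp add: flinear_on_def)

lemma domT_scale: "f \<in> domT m \<Longrightarrow> (\<lambda>t. c * f t) \<in> domT m"
  using domT_subspace[of m] by (simp add: fsubspace_def)

lemma T_diff:
  assumes "f \<in> domT m" "g \<in> domT m" "x \<in> \<omega> m"
  shows "T m (fdiff f g) x = T m f x - T m g x"
proof -
  have "T m (\<lambda>t. f t + (- 1) * g t) x = T m f x + (- 1) * T m g x"
    using T_add[OF assms(1) domT_scale[OF assms(2)] assms(3), of "- 1"] T_scale[OF assms(2,3), of "- 1"]
    by simp
  then show ?thesis by (simp add: fdiff_def)
qed

lemma qK_upper: "f \<in> FVK \<Longrightarrow> x \<in> \<omega> m \<Longrightarrow> norm (T m f x) * \<nu> j m x \<le> qK (j, m, ()) f"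
  unfolding FVnorm_def by (auto simp: mem_FVK intro: cSUP_upper)

lemma qK_least: "(\<And>x. x \<in> \<omega> m \<Longrightarrow> norm (T m f x) * \<nu> j m x \<le> r) \<Longrightarrow> qK (j, m, ()) f \<le> r"
  unfolding FVnorm_def using \<omega>_nonempty by (simp add: cSUP_least)

lemma FVK_add:
  assumes f: "f \<in> FVK" and g: "g \<in> FVK"
  shows "(\<lambda>t. f t + g t) \<in> FVK"
proof -
  have bound: "norm (T m (\<lambda>t. f t + g t) x) * \<nu> j m x \<le> qK (j, m, ()) f + qK (j, m, ()) g"
    if x: "x \<in> \<omega> m" for j m x
  proof -
    have "norm (T m (\<lambda>t. f t + g t) x) * \<nu> j m x \<le> (norm (T m f x) + norm (T m g x)) * \<nu> j m x"
      using f g x \<nu>_nonneg[OF x] by (auto simp: mem_FVK T_add intro: mult_right_mono norm_triangle_ineq)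
    also have "\<dots> \<le> qK (j, m, ()) f + qK (j, m, ()) g"
      using add_mono[OF qK_upper[OF f x] qK_upper[OF g x]] by (simp add: algebra_simps)
    finally show ?thesis .
  qed
  have "bdd_above ((\<lambda>x. norm (T m (\<lambda>t. f t + g t) x) * \<nu> j m x) ` \<omega> m)" for j m
    by (rule bdd_aboveI2) (rule bound)
  then show ?thesis
    using f g AP_subspace domT_subspace by (simp add: mem_FVK fsubspace_def)
qed

lemma FVK_scale:
  assumes f: "f \<in> FVK"
  shows "(\<lambda>t. c * f t) \<in> FVK"
proof -
  have bound: "norm (T m (\<lambda>t. c * f t) x) * \<nu> j m x \<le> norm c * qK (j, m, ()) f"
    if x: "x \<in> \<omega> m" for j m x
    using f x qK_upper[OF f x] by (auto simp: mem_FVK T_scale norm_mult mult.assoc intro: mult_left_mono)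
  have "bdd_above ((\<lambda>x. norm (T m (\<lambda>t. c * f t) x) * \<nu> j m x) ` \<omega> m)" for j m
    by (rule bdd_aboveI2) (rule bound)
  then show ?thesis
    using f AP_subspace domT_subspace by (simp add: mem_FVK fsubspace_def)
qed

lemma FVK_diff: "f \<in> FVK \<Longrightarrow> g \<in> FVK \<Longrightarrow> fdiff f g \<in> FVK"
  using FVK_add[OF _ FVK_scale[of g "- 1"], of f] by (simp add: fdiff_def)

lemma zero_mem_FVK: "(\<lambda>_. 0) \<in> FVK"
proof -
  have "(\<lambda>_. 0) \<in> domT m" for m using domT_subspace[of m] by (simp add: fsubspace_def)
  then have "T m (\<lambda>_. 0) x = 0" if "x \<in> \<omega> m" for m x
    using T_scale[of "\<lambda>_. 0" m x 0] that by simp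
  then show ?thesis
    using AP_subspace domT_subspace by (auto simp: mem_FVK fsubspace_def intro: bdd_aboveI2[where M = 0])
qed

lemma Tfunctional_mem_fdual:
  assumes x: "x \<in> \<omega> m"
  shows "Tfunctional FVK T m x \<in> fdual FVK qK"
proof -
  obtain j where j: "0 < \<nu> j m x" using \<nu>_pos[OF x] by blast
  have "norm (Tfunctional FVK T m x f - Tfunctional FVK T m x g) \<le> (1 / \<nu> j m x) * qK (j, m, ()) (fdiff f g)"
    if "f \<in> FVK" "g \<in> FVK" for f g
    using qK_upper[OF FVK_diff[OF that] x, of j] that j x
    by (simp add: Tfunctional_def T_diff mem_FVK field_simps)
  then have "continuous_map (seminorm_topology FVK fdiff UNIV qK) euclidean (Tfunctional FVK T m x)"
    using j by (intro continuous_map_seminorm_topologyI[where C = "1 / \<nu> j m x" and i = "(j, m, ())"]) auto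
  moreover have "Tfunctional FVK T m x (\<lambda>t. f t + g t) = Tfunctional FVK T m x f + Tfunctional FVK T m x g"
    if "f \<in> FVK" "g \<in> FVK" for f g
    using that x FVK_add[OF that] by (simp add: Tfunctional_def T_add mem_FVK)
  moreover have "Tfunctional FVK T m x (\<lambda>t. c * f t) = c * Tfunctional FVK T m x f" if "f \<in> FVK" for c f
    using that x FVK_scale[OF that] by (simp add: Tfunctional_def T_scale mem_FVK)
  ultimately show ?thesis by (simp add: fdual_def Tfunctional_def)
qed

lemma FVK_finite_net:
  assumes "compactin (seminorm_topology FVK fdiff UNIV qK) B" "\<rho> > 0"
  shows "\<exists>N. finite N \<and> N \<subseteq> B \<and> (\<forall>f\<in>B. \<exists>l\<in>N. \<forall>x\<in>\<omega> m. norm (T m f x - T m l x) * \<nu> j m x < \<rho>)"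
proof -
  have triangle: "qK (j, m, ()) (fdiff f g) \<le> qK (j, m, ()) (fdiff f h) + qK (j, m, ()) (fdiff h g)"
    if "f \<in> FVK" "g \<in> FVK" "h \<in> FVK" for f g h
  proof (rule qK_least)
    fix x assume x: "x \<in> \<omega> m"
    have "norm (T m (fdiff f g) x) * \<nu> j m x
        \<le> (norm (T m (fdiff f h) x) + norm (T m (fdiff h g) x)) * \<nu> j m x"
      using that x \<nu>_nonneg[OF x] norm_triangle_ineq[of "T m f x - T m h x" "T m h x - T m g x"]
      by (intro mult_right_mono) (simp_all add: T_diff mem_FVK)
    also have "\<dots> \<le> qK (j, m, ()) (fdiff f h) + qK (j, m, ()) (fdiff h g)"
      using qK_upper[OF FVK_diff x] that by (simp add: distrib_right add_mono)
    finally show "norm (T m (fdiff f g) x) * \<nu> j m x \<le> \<dots>" .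
  qed
  have self: "qK (j, m, ()) (fdiff f f) \<le> 0" if "f \<in> FVK" for f
    using that by (intro qK_least) (simp add: T_diff mem_FVK)
  obtain N where N: "finite N" "N \<subseteq> B" and net: "\<forall>f\<in>B. \<exists>l\<in>N. qK (j, m, ()) (fdiff f l) < \<rho>"
    using compactin_seminorm_topology_finite_net[where i = "(j, m, ())" and q = qK and diff = fdiff and V = FVK,
        OF assms(1) UNIV_I assms(2) triangle self]
    by blast
  have "B \<subseteq> FVK" using compactin_subset_topspace[OF assms(1)] by simp
  have "\<exists>l\<in>N. \<forall>x\<in>\<omega> m. norm (T m f x - T m l x) * \<nu> j m x < \<rho>" if f: "f \<in> B" for f
  proof -
    obtain l where l: "l \<in> N" and q: "qK (j, m, ()) (fdiff f l) < \<rho>" using net f by blast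
    have fl: "f \<in> FVK" "l \<in> FVK" using f l N(2) \<open>B \<subseteq> FVK\<close> by auto
    have "norm (T m f x - T m l x) * \<nu> j m x < \<rho>" if x: "x \<in> \<omega> m" for x
    proof -
      have "norm (T m f x - T m l x) * \<nu> j m x = norm (T m (fdiff f l) x) * \<nu> j m x"
        using fl x by (simp add: T_diff mem_FVK)
      also have "\<dots> \<le> qK (j, m, ()) (fdiff f l)" by (rule qK_upper[OF FVK_diff[OF fl] x])
      finally show ?thesis using q by linarith
    qed
    then show ?thesis using l by blast
  qed
  then show ?thesis using N by blast
qed

lemma FVK_common_tail:
  assumes FVK_AP: "FVK \<subseteq> AP_pi \<pi> \<KK> \<omega> \<nu> domT T norm_seminorm (-) (\<lambda>r t. of_real r * t)"
    and union_closed: "\<And>K1 K2. K1 \<in> \<KK> \<Longrightarrow> K2 \<in> \<KK> \<Longrightarrow> K1 \<union> K2 \<in> \<KK>"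
    and "finite N" "N \<subseteq> FVK" "\<rho> > 0"
  shows "\<exists>K\<in>\<KK>. \<forall>l\<in>N. \<forall>x\<in>\<omega> m. \<pi> x \<notin> K \<longrightarrow> norm (T m l x) * \<nu> j m x < \<rho>"
proof -
  have tails: "\<forall>l\<in>N. \<exists>K\<in>\<KK>. \<forall>x\<in>\<omega> m. \<pi> x \<notin> K \<longrightarrow> norm (T m l x) * \<nu> j m x < \<rho>"
  proof
    fix l assume "l \<in> N"
    then have "l \<in> AP_pi \<pi> \<KK> \<omega> \<nu> domT T norm_seminorm (-) (\<lambda>r t. of_real r * t)"
      using \<open>N \<subseteq> FVK\<close> FVK_AP by blast
    then show "\<exists>K\<in>\<KK>. \<forall>x\<in>\<omega> m. \<pi> x \<notin> K \<longrightarrow> norm (T m l x) * \<nu> j m x < \<rho>"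
      using \<open>\<rho> > 0\<close> by (rule AP_pi_tail)
  qed
  obtain Kl where Kl: "\<forall>l\<in>N. Kl l \<in> \<KK> \<and> (\<forall>x\<in>\<omega> m. \<pi> x \<notin> Kl l \<longrightarrow> norm (T m l x) * \<nu> j m x < \<rho>)"
    using bchoice[OF tails[unfolded Bex_def]] by blast
  \<comment> \<open>\<open>K0\<close> keeps the union below in \<open>\<KK>\<close> when \<open>N = {}\<close>.\<close>
  obtain K0 where "K0 \<in> \<KK>"
    using AP_pi_tail[OF subsetD[OF FVK_AP zero_mem_FVK] \<open>\<rho> > 0\<close>] by blast
  have "Kl l \<in> \<KK>" if "l \<in> N" for l using Kl that by blast
  with union_closed \<open>K0 \<in> \<KK>\<close> \<open>finite N\<close> have "K0 \<union> \<Union>(Kl ` N) \<in> \<KK>"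
    by (rule Un_Union_image_mem)
  moreover have "\<forall>l\<in>N. \<forall>x\<in>\<omega> m. \<pi> x \<notin> K0 \<union> \<Union>(Kl ` N) \<longrightarrow> norm (T m l x) * \<nu> j m x < \<rho>"
    using Kl by auto
  ultimately show ?thesis by (rule bexI[rotated])
qed

lemma FVK_common_point_net:
  assumes FVK_AP: "FVK \<subseteq> AP_pi \<pi> \<KK> \<omega> \<nu> domT T norm_seminorm (-) (\<lambda>r t. of_real r * t)"
    and "finite N" "N \<subseteq> FVK" "\<rho> > 0"
  shows "\<exists>W0. finite W0 \<and> W0 \<subseteq> \<omega> m \<and> (\<forall>x\<in>\<omega> m. \<exists>x'\<in>W0. \<forall>l\<in>N.
    norm (of_real (\<nu> j m x) * T m l x - of_real (\<nu> j m x') * T m l x') < 2 * \<rho>)"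
proof -
  have "\<forall>l\<in>N. \<exists>G. finite G \<and> (\<forall>x\<in>\<omega> m. \<exists>v\<in>G. norm (of_real (\<nu> j m x) * T m l x - v) < \<rho>)"
  proof
    fix l assume "l \<in> N"
    then have "l \<in> FVK" using \<open>N \<subseteq> FVK\<close> by blast
    then show "\<exists>G. finite G \<and> (\<forall>x\<in>\<omega> m. \<exists>v\<in>G. norm (of_real (\<nu> j m x) * T m l x - v) < \<rho>)"
      by (rule AP_pi_weighted_range_net[OF subsetD[OF FVK_AP] \<open>\<rho> > 0\<close> \<nu>_nonneg])
  qed
  then show ?thesis
    by (rule finite_family_common_net[where h = "\<lambda>l x. of_real (\<nu> j m x) * T m l x", OF \<open>finite N\<close>])
qed

lemma net_close_points:
  assumes net: "\<forall>f\<in>B. \<exists>l\<in>N. \<forall>y\<in>\<omega> m. norm (T m f y - T m l y) * \<nu> j m y < \<rho>"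
    and x: "x \<in> \<omega> m" and x': "x' \<in> \<omega> m"
    and close: "\<forall>l\<in>N. norm (of_real (\<nu> j m x) * T m l x - of_real (\<nu> j m x') * T m l x') < 2 * \<rho>"
  shows "\<forall>f\<in>B. norm (of_real (\<nu> j m x) * T m f x + - of_real (\<nu> j m x') * T m f x') \<le> 4 * \<rho>"
proof
  fix f assume "f \<in> B"
  then obtain l where "l \<in> N" and near: "\<forall>y\<in>\<omega> m. norm (T m f y - T m l y) * \<nu> j m y < \<rho>"
    using net by blast
  have "norm (of_real (\<nu> j m x) * (T m f x - T m l x)) < \<rho>"
      "norm (of_real (\<nu> j m x') * (T m l x' - T m f x')) < \<rho>"
    using near x x' \<nu>_nonneg[OF x] \<nu>_nonneg[OF x']
    by (auto simp: norm_mult norm_minus_commute mult.commute)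
  moreover have "norm (of_real (\<nu> j m x) * T m l x - of_real (\<nu> j m x') * T m l x') < 2 * \<rho>"
    using close \<open>l \<in> N\<close> by blast
  moreover note norm_mult_diff_le_via[of "of_real (\<nu> j m x)" "T m f x" "of_real (\<nu> j m x')" "T m f x'"
      "T m l x" "T m l x'"]
  ultimately show "norm (of_real (\<nu> j m x) * T m f x + - of_real (\<nu> j m x') * T m f x') \<le> 4 * \<rho>"
    by simp
qed

end

locale eps_product_setting = seminormed_space sc p + weighted_function_space AP domT T \<omega> \<nu>
  for sc :: "'k::real_normed_field \<Rightarrow> 'e::ab_group_add \<Rightarrow> 'e" and p :: "'a \<Rightarrow> 'e \<Rightarrow> real"
    and AP :: "('o \<Rightarrow> 'k) set" and domT :: "'m \<Rightarrow> ('o \<Rightarrow> 'k) set" and T :: "'m \<Rightarrow> ('o \<Rightarrow> 'k) \<Rightarrow> 'w \<Rightarrow> 'k"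
    and \<omega> :: "'m \<Rightarrow> 'w set" and \<nu> :: "'j \<Rightarrow> 'm \<Rightarrow> 'w \<Rightarrow> real" +
  fixes u :: "(('o \<Rightarrow> 'k) \<Rightarrow> 'k) \<Rightarrow> 'e"
  assumes u_eps_prod: "u \<in> eps_prod (FV AP domT T \<omega> \<nu> norm_seminorm) (FVnorm T \<omega> \<nu> norm_seminorm) sc p"
begin

text \<open>Under the hypothesis of part (1), \<open>uT m x\<close> is \<open>T\<^sup>E\<^sub>m(S u)(x)\<close>.\<close>
abbreviation uT :: "'m \<Rightarrow> 'w \<Rightarrow> 'e" where "uT m x \<equiv> u (Tfunctional FVK T m x)"

lemma u_two_point:
  assumes "x \<in> \<omega> m" "y \<in> \<omega> m"
  shows "u (\<lambda>f. a * Tfunctional FVK T m x f + b * Tfunctional FVK T m y f) = sc a (uT m x) + sc b (uT m y)"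
proof -
  have add: "u (\<lambda>f. y1 f + y2 f) = u y1 + u y2" if "y1 \<in> fdual FVK qK" "y2 \<in> fdual FVK qK" for y1 y2
    using u_eps_prod that by (simp add: eps_prod_def)
  have scale: "u (\<lambda>f. c * y f) = sc c (u y)" if "y \<in> fdual FVK qK" for c y
    using u_eps_prod that by (simp add: eps_prod_def)
  show ?thesis
    using add[OF fdual_scale fdual_scale, OF Tfunctional_mem_fdual Tfunctional_mem_fdual, OF assms]
      scale[OF Tfunctional_mem_fdual[OF assms(1)]] scale[OF Tfunctional_mem_fdual[OF assms(2)]]
    by simp
qed

lemma two_point_bound:
  shows "\<exists>\<eta> B. \<eta> > 0 \<and> B \<subseteq> FVK \<and> compactin (seminorm_topology FVK fdiff UNIV qK) B \<and>
    (\<forall>m x y a b s. x \<in> \<omega> m \<longrightarrow> y \<in> \<omega> m \<longrightarrow> s > 0 \<longrightarrow>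
      (\<forall>f\<in>B. norm (a * T m f x + b * T m f y) \<le> \<eta> * s) \<longrightarrow> p \<alpha> (sc a (uT m x) + sc b (uT m y)) < s)"
proof -
  obtain \<eta> B where "\<eta> > 0" "B \<subseteq> FVK" "compactin (seminorm_topology FVK fdiff UNIV qK) B"
    and bound: "\<forall>y\<in>fdual FVK qK. \<forall>s>0. (\<forall>f\<in>B. norm (y f) \<le> \<eta> * s) \<longrightarrow> p \<alpha> (u y) < s"
    using eps_prod_bound[OF u_eps_prod, where \<alpha> = \<alpha>] by blast
  have "\<forall>m x y a b s. x \<in> \<omega> m \<longrightarrow> y \<in> \<omega> m \<longrightarrow> s > 0 \<longrightarrow>
      (\<forall>f\<in>B. norm (a * T m f x + b * T m f y) \<le> \<eta> * s) \<longrightarrow> p \<alpha> (sc a (uT m x) + sc b (uT m y)) < s"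
  proof (intro allI impI)
    fix m x y a b s
    assume xy: "x \<in> \<omega> m" "y \<in> \<omega> m" and "s > 0" and small: "\<forall>f\<in>B. norm (a * T m f x + b * T m f y) \<le> \<eta> * s"
    let ?y = "\<lambda>f. a * Tfunctional FVK T m x f + b * Tfunctional FVK T m y f"
    have "?y \<in> fdual FVK qK"
      using xy by (intro fdual_add fdual_scale Tfunctional_mem_fdual)
    moreover have "\<forall>f\<in>B. norm (?y f) \<le> \<eta> * s"
      using small \<open>B \<subseteq> FVK\<close> by (auto simp: Tfunctional_def)
    ultimately have "p \<alpha> (u ?y) < s" using \<open>s > 0\<close> bound by simp
    then show "p \<alpha> (sc a (uT m x) + sc b (uT m y)) < s" by (simp add: u_two_point[OF xy])
  qed
  with \<open>\<eta> > 0\<close> \<open>B \<subseteq> FVK\<close> \<open>compactin (seminorm_topology FVK fdiff UNIV qK) B\<close> show ?thesis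
    by blast
qed

lemma uT_tail:
  assumes FVK_AP: "FVK \<subseteq> AP_pi \<pi> \<KK> \<omega> \<nu> domT T norm_seminorm (-) (\<lambda>r t. of_real r * t)"
    and union_closed: "\<And>K1 K2. K1 \<in> \<KK> \<Longrightarrow> K2 \<in> \<KK> \<Longrightarrow> K1 \<union> K2 \<in> \<KK>" and "\<epsilon> > 0"
  shows "\<exists>K\<in>\<KK>. \<forall>x\<in>\<omega> m. \<pi> x \<notin> K \<longrightarrow> p \<alpha> (uT m x) * \<nu> j m x < \<epsilon>"
proof -
  obtain \<eta> B where "\<eta> > 0" "B \<subseteq> FVK" and B: "compactin (seminorm_topology FVK fdiff UNIV qK) B"
    and bound: "\<forall>m x y a b s. x \<in> \<omega> m \<longrightarrow> y \<in> \<omega> m \<longrightarrow> s > 0 \<longrightarrow>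
      (\<forall>f\<in>B. norm (a * T m f x + b * T m f y) \<le> \<eta> * s) \<longrightarrow> p \<alpha> (sc a (uT m x) + sc b (uT m y)) < s"
    using two_point_bound[of \<alpha>] by (elim exE conjE)
  define \<rho> where "\<rho> = \<eta> * \<epsilon> / 4"
  have "\<rho> > 0" using \<open>\<eta> > 0\<close> \<open>\<epsilon> > 0\<close> by (simp add: \<rho>_def)
  obtain N where "finite N" "N \<subseteq> B"
    and net: "\<forall>f\<in>B. \<exists>l\<in>N. \<forall>x\<in>\<omega> m. norm (T m f x - T m l x) * \<nu> j m x < \<rho>"
    using FVK_finite_net[OF B \<open>\<rho> > 0\<close>, where m = m and j = j] by (elim exE conjE)
  have "N \<subseteq> FVK" using \<open>N \<subseteq> B\<close> \<open>B \<subseteq> FVK\<close> by blast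
  with union_closed \<open>finite N\<close> \<open>\<rho> > 0\<close>
  have "\<exists>K\<in>\<KK>. \<forall>l\<in>N. \<forall>x\<in>\<omega> m. \<pi> x \<notin> K \<longrightarrow> norm (T m l x) * \<nu> j m x < \<rho>"
    by (intro FVK_common_tail[OF FVK_AP])
  then obtain K where "K \<in> \<KK>"
    and tail: "\<forall>l\<in>N. \<forall>x\<in>\<omega> m. \<pi> x \<notin> K \<longrightarrow> norm (T m l x) * \<nu> j m x < \<rho>"
    by blast
  have "p \<alpha> (uT m x) * \<nu> j m x < \<epsilon>" if x: "x \<in> \<omega> m" and "\<pi> x \<notin> K" for x
  proof -
    have small: "\<forall>f\<in>B. norm (of_real (\<nu> j m x) * T m f x + 0 * T m f x) \<le> \<eta> * (\<epsilon> / 2)"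
    proof
      fix f assume "f \<in> B"
      obtain l where "l \<in> N" and near: "norm (T m f x - T m l x) * \<nu> j m x < \<rho>"
        using net \<open>f \<in> B\<close> x by blast
      then have "norm (T m l x) * \<nu> j m x < \<rho>"
        using tail x \<open>\<pi> x \<notin> K\<close> by blast
      moreover have "norm (T m f x) * \<nu> j m x \<le> norm (T m f x - T m l x) * \<nu> j m x + norm (T m l x) * \<nu> j m x"
        using norm_triangle_ineq[of "T m f x - T m l x" "T m l x"] \<nu>_nonneg[OF x]
        by (simp flip: distrib_right add: mult_right_mono)
      ultimately show "norm (of_real (\<nu> j m x) * T m f x + 0 * T m f x) \<le> \<eta> * (\<epsilon> / 2)"
        using near \<nu>_nonneg[OF x] by (simp add: \<rho>_def norm_mult mult.commute)
    qed
    have "\<epsilon> / 2 > 0" using \<open>\<epsilon> > 0\<close> by simp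
    then have "p \<alpha> (sc (of_real (\<nu> j m x)) (uT m x) + sc 0 (uT m x)) < \<epsilon> / 2"
      by (rule bound[rule_format, OF x x]) (use small in blast)
    then show ?thesis
      using mult_nonneg_nonneg[OF \<nu>_nonneg[OF x] seminorm_nonneg, of j \<alpha> "uT m x"] \<nu>_nonneg[OF x]
      by (simp add: homogeneous mult.commute)
  qed
  with \<open>K \<in> \<KK>\<close> show ?thesis by blast
qed

lemma uT_weighted_precompact:
  assumes FVK_AP: "FVK \<subseteq> AP_pi \<pi> \<KK> \<omega> \<nu> domT T norm_seminorm (-) (\<lambda>r t. of_real r * t)"
  shows "precompact_sn (-) p ((\<lambda>x. sc (of_real (\<nu> j m x)) (uT m x)) ` \<omega> m)"
  unfolding precompact_sn_def
proof (intro allI impI)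
  fix F :: "'a set" and \<delta> :: real assume "finite F \<and> \<delta> > 0"
  then have "finite F" "\<delta> > 0" by simp_all
  obtain \<alpha> C where "C \<ge> 0" and dominated: "\<forall>i\<in>F. \<forall>a. p i a \<le> C * p \<alpha> a"
    using finite_seminorms_dominated[OF \<open>finite F\<close>] by (elim exE conjE)
  define s where "s = \<delta> / (C + 1)"
  have "s > 0" "C * s < \<delta>" using \<open>\<delta> > 0\<close> \<open>C \<ge> 0\<close> by (simp_all add: s_def field_simps)
  obtain \<eta> B where "\<eta> > 0" "B \<subseteq> FVK" and B: "compactin (seminorm_topology FVK fdiff UNIV qK) B"
    and bound: "\<forall>m x y a b s. x \<in> \<omega> m \<longrightarrow> y \<in> \<omega> m \<longrightarrow> s > 0 \<longrightarrow>
      (\<forall>f\<in>B. norm (a * T m f x + b * T m f y) \<le> \<eta> * s) \<longrightarrow> p \<alpha> (sc a (uT m x) + sc b (uT m y)) < s"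
    using two_point_bound[of \<alpha>] by (elim exE conjE)
  define \<rho> where "\<rho> = \<eta> * s / 4"
  have "\<rho> > 0" using \<open>\<eta> > 0\<close> \<open>s > 0\<close> by (simp add: \<rho>_def)
  obtain N where "finite N" "N \<subseteq> B"
    and net: "\<forall>f\<in>B. \<exists>l\<in>N. \<forall>x\<in>\<omega> m. norm (T m f x - T m l x) * \<nu> j m x < \<rho>"
    using FVK_finite_net[OF B \<open>\<rho> > 0\<close>, where m = m and j = j] by (elim exE conjE)
  have "N \<subseteq> FVK" using \<open>N \<subseteq> B\<close> \<open>B \<subseteq> FVK\<close> by blast
  obtain W0 where "finite W0" "W0 \<subseteq> \<omega> m" and close: "\<forall>x\<in>\<omega> m. \<exists>x'\<in>W0. \<forall>l\<in>N.
      norm (of_real (\<nu> j m x) * T m l x - of_real (\<nu> j m x') * T m l x') < 2 * \<rho>"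
    using FVK_common_point_net[OF FVK_AP \<open>finite N\<close> \<open>N \<subseteq> FVK\<close> \<open>\<rho> > 0\<close>, where m = m and j = j]
    by (elim exE conjE)
  define G where "G = (\<lambda>x. sc (of_real (\<nu> j m x)) (uT m x)) ` W0"
  have "(\<lambda>x. sc (of_real (\<nu> j m x)) (uT m x)) ` \<omega> m \<subseteq> (\<Union>g\<in>G. {e. \<forall>i\<in>F. p i (e - g) < \<delta>})"
  proof
    fix e assume "e \<in> (\<lambda>x. sc (of_real (\<nu> j m x)) (uT m x)) ` \<omega> m"
    then obtain x where x: "x \<in> \<omega> m" and e: "e = sc (of_real (\<nu> j m x)) (uT m x)" by blast
    obtain x' where "x' \<in> W0" and x'_close: "\<forall>l\<in>N.
        norm (of_real (\<nu> j m x) * T m l x - of_real (\<nu> j m x') * T m l x') < 2 * \<rho>"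
      using close x by blast
    have x': "x' \<in> \<omega> m" using \<open>x' \<in> W0\<close> \<open>W0 \<subseteq> \<omega> m\<close> by blast
    have small: "\<forall>f\<in>B. norm (of_real (\<nu> j m x) * T m f x + - of_real (\<nu> j m x') * T m f x') \<le> \<eta> * s"
      using net_close_points[OF net x x' x'_close] by (simp add: \<rho>_def)
    define g where "g = sc (of_real (\<nu> j m x')) (uT m x')"
    have "p \<alpha> (sc (of_real (\<nu> j m x)) (uT m x) + sc (- of_real (\<nu> j m x')) (uT m x')) < s"
      by (rule bound[rule_format, OF x x' \<open>s > 0\<close>]) (use small in blast)
    then have "p \<alpha> (e - g) < s" by (simp add: e g_def E.scale_minus_left)
    then have "\<forall>i\<in>F. p i (e - g) < \<delta>"
      using dominated \<open>C \<ge> 0\<close> \<open>C * s < \<delta>\<close>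
      by (metis (no_types, opaque_lifting) mult_left_mono order_le_less_trans order_less_imp_le)
    moreover have "g \<in> G" using \<open>x' \<in> W0\<close> by (simp add: G_def g_def)
    ultimately show "e \<in> (\<Union>g\<in>G. {e. \<forall>i\<in>F. p i (e - g) < \<delta>})" by blast
  qed
  moreover have "finite G" by (simp add: G_def \<open>finite W0\<close>)
  ultimately show "\<exists>G. finite G \<and> (\<lambda>x. sc (of_real (\<nu> j m x)) (uT m x)) ` \<omega> m
      \<subseteq> (\<Union>g\<in>G. {y. \<forall>i\<in>F. p i (y - g) < \<delta>})"
    by blast
qed

lemma uT_AP_pi:
  assumes FVK_AP: "FVK \<subseteq> AP_pi \<pi> \<KK> \<omega> \<nu> domT T norm_seminorm (-) (\<lambda>r t. of_real r * t)"
    and union_closed: "\<And>K1 K2. K1 \<in> \<KK> \<Longrightarrow> K2 \<in> \<KK> \<Longrightarrow> K1 \<union> K2 \<in> \<KK>"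
    and g: "\<And>m x. x \<in> \<omega> m \<Longrightarrow> g \<in> domTE m \<and> TE m g x = uT m x"
  shows "g \<in> AP_pi \<pi> \<KK> \<omega> \<nu> domTE TE p (-) (\<lambda>r a. sc (of_real r) a)"
  unfolding AP_pi_def mem_Collect_eq
proof (intro conjI allI impI)
  fix m
  obtain x where "x \<in> \<omega> m" using \<omega>_nonempty by blast
  then show "g \<in> domTE m" using g by blast
next
  fix \<epsilon> :: real and j m \<alpha> assume "\<epsilon> > 0"
  then have "\<epsilon> / 2 > 0" by simp
  then obtain K where "K \<in> \<KK>" and tail: "\<forall>x\<in>\<omega> m. \<pi> x \<notin> K \<longrightarrow> p \<alpha> (uT m x) * \<nu> j m x < \<epsilon> / 2"
    using uT_tail[OF FVK_AP union_closed, where m = m and \<alpha> = \<alpha> and j = j] by blast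
  have "\<forall>x\<in>\<omega> m. \<pi> x \<notin> K \<longrightarrow> p \<alpha> (TE m g x) * \<nu> j m x \<le> \<epsilon> / 2"
    using tail g by fastforce
  then have "\<exists>c<\<epsilon>. \<forall>x\<in>\<omega> m. \<pi> x \<notin> K \<longrightarrow> p \<alpha> (TE m g x) * \<nu> j m x \<le> c"
    using \<open>\<epsilon> > 0\<close> by (intro exI[of _ "\<epsilon> / 2"]) simp
  moreover have "precompact_sn (-) p {sc (of_real (\<nu> j m x)) (TE m g x) | x. x \<in> \<omega> m \<and> \<pi> x \<in> K}"
    by (rule precompact_sn_subset[OF uT_weighted_precompact[OF FVK_AP, where m = m and j = j]]) (auto simp: g)
  ultimately show "\<exists>K\<in>\<KK>. (\<exists>c<\<epsilon>. \<forall>x\<in>\<omega> m. \<pi> x \<notin> K \<longrightarrow> p \<alpha> (TE m g x) * \<nu> j m x \<le> c) \<and>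
      precompact_sn (-) p {sc (of_real (\<nu> j m x)) (TE m g x) | x. x \<in> \<omega> m \<and> \<pi> x \<in> K}"
    using \<open>K \<in> \<KK>\<close> by blast
qed

end

theorem proposition4p13:
  fixes sc :: "'k::real_normed_field \<Rightarrow> 'e::ab_group_add \<Rightarrow> 'e"
    and p :: "'a \<Rightarrow> 'e \<Rightarrow> real"
    and APK :: "('o \<Rightarrow> 'k) set" and APE :: "('o \<Rightarrow> 'e) set"
    and \<omega> :: "'m \<Rightarrow> 'w set" and \<nu> :: "'j \<Rightarrow> 'm \<Rightarrow> 'w \<Rightarrow> real"
    and domTK :: "'m \<Rightarrow> ('o \<Rightarrow> 'k) set" and TK :: "'m \<Rightarrow> ('o \<Rightarrow> 'k) \<Rightarrow> 'w \<Rightarrow> 'k"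
    and domTE :: "'m \<Rightarrow> ('o \<Rightarrow> 'e) set" and TE :: "'m \<Rightarrow> ('o \<Rightarrow> 'e) \<Rightarrow> 'w \<Rightarrow> 'e"
    and X :: "'x set" and \<KK> :: "'x set set" and \<pi> :: "'w \<Rightarrow> 'x"
  defines "nK \<equiv> (\<lambda>(_::unit) (t::'k). norm t)"
  defines "FVK \<equiv> FV APK domTK TK \<omega> \<nu> nK"
    and "FVE \<equiv> FV APE domTE TE \<omega> \<nu> p"
  assumes E_vs: "vector_space sc"
    and E_nontriv: "\<exists>e::'e. e \<noteq> 0"
    and p_seminorm: "\<And>\<alpha> a b. p \<alpha> (a + b) \<le> p \<alpha> a + p \<alpha> b"
    and p_homog: "\<And>\<alpha> c a. p \<alpha> (sc c a) = norm c * p \<alpha> a"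
    and p_hausdorff: "\<And>a. a \<noteq> 0 \<Longrightarrow> \<exists>\<alpha>. p \<alpha> a \<noteq> 0"
    and p_directed: "\<And>\<alpha>1 \<alpha>2. \<exists>\<alpha>3 C. \<forall>a. max (p \<alpha>1 a) (p \<alpha>2 a) \<le> C * p \<alpha>3 a"
    and \<omega>_ne: "\<And>m. \<omega> m \<noteq> {}"
    and \<nu>_nonneg: "\<And>j m x. x \<in> \<omega> m \<Longrightarrow> \<nu> j m x \<ge> 0"
    and \<nu>_pos: "\<And>m x. x \<in> \<omega> m \<Longrightarrow> \<exists>j. \<nu> j m x > 0"
    and APK_sub: "fsubspace (*) APK"
    and APE_sub: "fsubspace sc APE"
    and domTK_sub: "\<And>m. fsubspace (*) (domTK m)"
    and domTE_sub: "\<And>m. fsubspace sc (domTE m)"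
    and TK_lin: "\<And>m. flinear_on (*) (domTK m) (\<omega> m) (TK m)"
    and TE_lin: "\<And>m. flinear_on sc (domTE m) (\<omega> m) (TE m)"
    and domK: "hausdorff_directed FVK (FVnorm TK \<omega> \<nu> nK)"
    and domK_delta: "\<And>x. delta_on FVK x \<in> fdual FVK (FVnorm TK \<omega> \<nu> nK)"
    and domE: "hausdorff_directed FVE (FVnorm TE \<omega> \<nu> p)"
    and \<KK>_X: "\<Union>\<KK> \<subseteq> X"
    and \<KK>_un: "\<And>K1 K2. K1 \<in> \<KK> \<Longrightarrow> K2 \<in> \<KK> \<Longrightarrow> K1 \<union> K2 \<in> \<KK>"
    and \<pi>_X: "\<And>m x. x \<in> \<omega> m \<Longrightarrow> \<pi> x \<in> X"
    and FVK_AP: "FVK \<subseteq> AP_pi \<pi> \<KK> \<omega> \<nu> domTK TK nK (-) (\<lambda>r t. of_real r * t)"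
    and FVE_AP: "FVE \<subseteq> AP_pi \<pi> \<KK> \<omega> \<nu> domTE TE p (-) (\<lambda>r a. sc (of_real r) a)"
  shows "((\<forall>u\<in>eps_prod FVK (FVnorm TK \<omega> \<nu> nK) sc p. \<forall>m. \<forall>x\<in>\<omega> m.
            S_map FVK u \<in> domTE m \<and> TE m (S_map FVK u) x = u (Tfunctional FVK TK m x))
          \<longrightarrow> (\<forall>u\<in>eps_prod FVK (FVnorm TK \<omega> \<nu> nK) sc p.
            S_map FVK u \<in> AP_pi \<pi> \<KK> \<omega> \<nu> domTE TE p (-) (\<lambda>r a. sc (of_real r) a)))
       \<and> ((\<forall>e'\<in>Edual sc p. \<forall>f\<in>FVE. \<forall>m.
            e' \<circ> f \<in> domTK m \<and> (\<forall>x\<in>\<omega> m. TK m (e' \<circ> f) x = e' (TE m f x)))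
          \<longrightarrow> (\<forall>e'\<in>Edual sc p. \<forall>f\<in>FVE.
            e' \<circ> f \<in> AP_pi \<pi> \<KK> \<omega> \<nu> domTK TK nK (-) (\<lambda>r t. of_real r * t)))"
proof -
  interpret E: seminormed_space sc p
    by (rule seminormed_space.intro[OF E_vs p_seminorm p_homog p_directed])
  interpret K: weighted_function_space APK domTK TK \<omega> \<nu>
    using \<omega>_ne \<nu>_nonneg \<nu>_pos APK_sub domTK_sub TK_lin by unfold_locales
  have FVK_AP': "K.FVK \<subseteq> AP_pi \<pi> \<KK> \<omega> \<nu> domTK TK norm_seminorm (-) (\<lambda>r t. of_real r * t)"
    using FVK_AP by (simp add: FVK_def nK_def)
  have "S_map FVK u \<in> AP_pi \<pi> \<KK> \<omega> \<nu> domTE TE p (-) (\<lambda>r a. sc (of_real r) a)"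
    if u: "u \<in> eps_prod FVK (FVnorm TK \<omega> \<nu> nK) sc p"
      and TE_S: "\<And>m x. x \<in> \<omega> m \<Longrightarrow> S_map FVK u \<in> domTE m \<and> TE m (S_map FVK u) x = u (Tfunctional FVK TK m x)"
    for u
  proof -
    interpret U: eps_product_setting sc p APK domTK TK \<omega> \<nu> u
      using u by unfold_locales (simp add: FVK_def nK_def)
    show ?thesis
      using FVK_AP' \<KK>_un TE_S unfolding FVK_def nK_def by (rule U.uT_AP_pi)
  qed
  moreover have "e' \<circ> f \<in> AP_pi \<pi> \<KK> \<omega> \<nu> domTK TK nK (-) (\<lambda>r t. of_real r * t)"
    if "e' \<in> Edual sc p" "f \<in> FVE" and TK_comp: "\<And>m. e' \<circ> f \<in> domTK m \<and> (\<forall>x\<in>\<omega> m. TK m (e' \<circ> f) x = e' (TE m f x))"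
    for e' f
    unfolding nK_def
    by (rule E.Edual_comp_AP_pi[OF \<open>e' \<in> Edual sc p\<close> subsetD[OF FVE_AP \<open>f \<in> FVE\<close>]])
      (use TK_comp \<nu>_nonneg in auto)
  ultimately show ?thesis by blast
qed

end
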